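(* Let $K$ be a number field and $f$ a monic family of polynomials, homogeneous of degree $d$ and weight $e$. Then, with all constants independent of $t$ (depending only on $K$ and $f$): (1) There exist $M_K$-constants $\mathfrak{a},\mathfrak{b}$ such that for all $v\in M_K$ and all $t,z\in K$ with $\log|z|_v>\frac{1}{e}\log^+|t|_v+\mathfrak{a}_v$, we have $|f_t(z)|_v\geq|z|_v$ and $\left|G_{f_t, v}(z)-\log|z|_v\right|\leq \mathfrak{b}_v$. Moreover $\mathfrak{b}_v=0$ unless $v$ is archimedean. (2) There exists a finite set $S\subseteq M_K$ such that for every non-archimedean $v\notin S$ and every $t\in K^*$ with $e\nmid v(t)$, we have $G_{f_t, v}(z)\geq \frac{1}{d}\log^+|t|_v$ for all $z\in K$. (3) There exists a finite set $S\subseteq M_K$ such that for any $t\in K$ and any $v\notin S$ with $|t|_v>1$, every preperiodic point $z\in K$ of $f_t$ satisfies $|z|^e_v=|t|_v$.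
   Context: $M_K$ is the set of places of $K$; each $|\cdot|_v$ extends a standard absolute value of $\mathbb{Q}$ and is fixed on $\overline K$; non-archimedean valuations are normalized so that $v(K^* )=\mathbb{Z}$. An $M_K$-constant is a function $v\mapsto\mathfrak{a}_v\in\mathbb{R}$ on $M_K$ vanishing for all but finitely many $v$. $\log^+X=\log\max\{1,X\}$. A monic family homogeneous of degree $d$ and weight $e$ ($e\ge2$) is one with $f_t(z)=\prod_{i=1}^{d/e}(z^e-\beta_i t)$ for fixed nonzero $\beta_i\in K$. For a polynomial $g$ of degree $d\ge2$, $G_{g,v}(P)=\lim_{n\to\infty}d^{-n}\log^+|g^n(P)|_v$. A point is preperiodic if its forward orbit is finite. *)

theory Defs
  imports "HOL-Analysis.Analysis" "HOL-Computational_Algebra.Primes"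
begin

definition number_field :: "'k::field_char_0 itself \<Rightarrow> bool" where
  "number_field _ \<longleftrightarrow> (\<exists>B::'k set. finite B \<and>
      (\<forall>x::'k. \<exists>c::'k \<Rightarrow> rat. x = (\<Sum>b\<in>B. of_rat (c b) * b)))"

definition abs_value :: "('k::field \<Rightarrow> real) \<Rightarrow> bool" where
  "abs_value a \<longleftrightarrow> (\<forall>x. a x \<ge> 0) \<and> (\<forall>x. a x = 0 \<longleftrightarrow> x = 0) \<and>
     (\<forall>x y. a (x * y) = a x * a y) \<and> (\<forall>x y. a (x + y) \<le> a x + a y)"

definition extends_arch :: "('k::field_char_0 \<Rightarrow> real) \<Rightarrow> bool" where
  "extends_arch a \<longleftrightarrow> (\<forall>n::int. a (of_int n) = \<bar>real_of_int n\<bar>)"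

definition extends_padic :: "nat \<Rightarrow> ('k::field_char_0 \<Rightarrow> real) \<Rightarrow> bool" where
  "extends_padic p a \<longleftrightarrow> (\<forall>n::int. n \<noteq> 0 \<longrightarrow>
      a (of_int n) = real p powr (- real (multiplicity (int p) n)))"

text \<open>The places M_K of K, each represented by its absolute value extending a standard
  absolute value of the rationals.\<close>
definition places :: "('k::field_char_0 \<Rightarrow> real) set" where
  "places = {a. abs_value a \<and> (extends_arch a \<or> (\<exists>p. prime p \<and> extends_padic p a))}"

definition archimedean :: "('k::field_char_0 \<Rightarrow> real) \<Rightarrow> bool" where
  "archimedean a \<longleftrightarrow> extends_arch a"

text \<open>Normalized valuation v with v(K^*) = Z at a non-archimedean place.\<close>
definition uniformizer :: "('k::field \<Rightarrow> real) \<Rightarrow> 'k \<Rightarrow> bool" where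
  "uniformizer a \<pi> \<longleftrightarrow> \<pi> \<noteq> 0 \<and> a \<pi> < 1 \<and>
     (\<forall>x. x \<noteq> 0 \<longrightarrow> (\<exists>k::int. a x = a \<pi> powi k))"

definition nval :: "('k::field \<Rightarrow> real) \<Rightarrow> 'k \<Rightarrow> int" where
  "nval a x = (THE k::int. a x = a (SOME \<pi>. uniformizer a \<pi>) powi k)"

definition MK_constant :: "(('k::field_char_0 \<Rightarrow> real) \<Rightarrow> real) \<Rightarrow> bool" where
  "MK_constant c \<longleftrightarrow> finite {v \<in> places. c v \<noteq> 0}"

definition logp :: "real \<Rightarrow> real" where
  "logp x = ln (max 1 x)"

text \<open>Monic family homogeneous of degree d = e * length beta and weight e:
  f_t(z) = prod_i (z^e - beta_i t).\<close>
definition famf :: "nat \<Rightarrow> 'k::field list \<Rightarrow> 'k \<Rightarrow> 'k \<Rightarrow> 'k" where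
  "famf e \<beta> t z = (\<Prod>b\<leftarrow>\<beta>. z ^ e - b * t)"

definition green :: "nat \<Rightarrow> ('k \<Rightarrow> 'k) \<Rightarrow> ('k \<Rightarrow> real) \<Rightarrow> 'k \<Rightarrow> real" where
  "green d g a P = lim (\<lambda>n. logp (a ((g ^^ n) P)) / real d ^ n)"

definition preperiodic :: "('k \<Rightarrow> 'k) \<Rightarrow> 'k \<Rightarrow> bool" where
  "preperiodic g z \<longleftrightarrow> finite {(g ^^ n) z | n. True}"

end

theory Submission
  imports Defs "HOL-Real_Asymp.Real_Asymp"
begin

(* If |z|_v is large compared with |t|_v^(1/e) and the |beta_i|_v, every factor z^e - beta_i t
   of f_t(z) is comparable to z^e: equal to it in absolute value at a non-archimedean place by the
   strict triangle inequality, and within a factor 2 at an archimedean one. So the orbit grows like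
   |z|^(d^n), and G differs from log|z| by a geometric sum of errors bounded by (d/e) log 2.

   At a non-archimedean place where all beta_i are units the dynamics is explicit: if |z|^e > |t|
   the orbit escapes with G = log|z|; if |z|^e < |t| then |f_t(z)| = |t|^(d/e), which escapes at the
   next step, so G = log|t| / e; and |z|^e = |t| forces e | v(t). Only finitely many places are
   archimedean or make some beta_i a non-unit: a number field has only finitely many absolute values
   over each place of Q (otherwise weak approximation would produce more rationally independent
   elements than the degree allows), and a nonzero element is a unit at every place not dividing the
   coefficients of a rational relation among its powers. *)

section \<open>Absolute values\<close>

context
  fixes v :: "'k::field \<Rightarrow> real"
  assumes av: "abs_value v"
begin

lemma abs_value_nonneg: "v x \<ge> 0"
  using av unfolding abs_value_def by blast

lemma abs_value_eq_0_iff: "v x = 0 \<longleftrightarrow> x = 0"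
  using av unfolding abs_value_def by blast

lemma abs_value_mult: "v (x * y) = v x * v y"
  using av unfolding abs_value_def by blast

lemma abs_value_triangle: "v (x + y) \<le> v x + v y"
  using av unfolding abs_value_def by blast

lemma abs_value_0 [simp]: "v 0 = 0"
  by (simp add: abs_value_eq_0_iff)

lemma abs_value_pos: "x \<noteq> 0 \<Longrightarrow> v x > 0"
  using abs_value_nonneg abs_value_eq_0_iff by (metis less_eq_real_def)

lemma abs_value_1 [simp]: "v 1 = 1"
  using abs_value_mult[of 1 1] abs_value_pos[of 1] by simp

lemma abs_value_power: "v (x ^ n) = v x ^ n"
  by (induction n) (auto simp: abs_value_mult)

lemma abs_value_inverse: "v (inverse x) = inverse (v x)"
proof (cases "x = 0")
  case False
  then have "v (inverse x) * v x = 1"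
    using abs_value_mult[of "inverse x" x] by simp
  then show ?thesis using abs_value_pos[OF False] by (simp add: field_simps)
qed simp

lemma abs_value_divide: "v (x / y) = v x / v y"
  by (simp add: divide_inverse abs_value_mult abs_value_inverse)

lemma abs_value_power_int: "v (x powi n) = v x powi n"
  by (simp add: power_int_def abs_value_power abs_value_inverse)

lemma abs_value_minus: "v (- x) = v x"
proof -
  have "v (-1) ^ 2 = 1"
    using abs_value_power[of "-1" 2] by simp
  then have "v (-1) = 1"
    using abs_value_nonneg[of "-1"] by (simp add: power2_eq_1_iff)
  then show ?thesis using abs_value_mult[of "-1" x] by simp
qed

lemma abs_value_diff_le: "v (x - y) \<le> v x + v y"
  using abs_value_triangle[of x "-y"] abs_value_minus[of y] by simp

lemma abs_value_reverse_triangle: "v x - v y \<le> v (x + y)"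
  using abs_value_triangle[of "x + y" "-y"] abs_value_minus[of y] by simp

lemma abs_value_reverse_triangle_diff: "v x - v y \<le> v (x - y)"
  using abs_value_reverse_triangle[of x "-y"] abs_value_minus[of y] by simp

lemma abs_value_sum_le: "v (sum f S) \<le> (\<Sum>i\<in>S. v (f i))"
  by (induction S rule: infinite_finite_induct)
    (auto intro: order_trans[OF abs_value_triangle])

lemma abs_value_prod_list: "v (prod_list xs) = (\<Prod>x\<leftarrow>xs. v x)"
  by (induction xs) (auto simp: abs_value_mult)

end

lemma abs_value_of_rat:
  fixes v :: "'k::field_char_0 \<Rightarrow> real"
  assumes "abs_value v" and "quotient_of q = (a, b)"
  shows "v (of_rat q) = v (of_int a) / v (of_int b)"
proof -
  have "(of_rat q :: 'k) = of_int a / of_int b"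
    using quotient_of_div[OF assms(2)] by (simp add: of_rat_divide)
  then show ?thesis by (simp add: abs_value_divide[OF assms(1)])
qed

lemma abs_values_agree_on_rats:
  fixes u w :: "'k::field_char_0 \<Rightarrow> real"
  assumes "abs_value u" "abs_value w" and "\<And>n::int. u (of_int n) = w (of_int n)"
  shows "u (of_rat q) = w (of_rat q)"
  using abs_value_of_rat[OF assms(1)] abs_value_of_rat[OF assms(2)] assms(3)
  by (cases "quotient_of q") simp

section \<open>Ultrametric absolute values\<close>

definition ultrametric :: "('k::field \<Rightarrow> real) \<Rightarrow> bool" where
  "ultrametric v \<longleftrightarrow> (\<forall>x y. v (x + y) \<le> max (v x) (v y))"

lemma power_gt_linear:
  fixes c :: real
  assumes "c > 1"
  shows "\<exists>k::nat. c ^ k > real k + 1"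
proof -
  have "eventually (\<lambda>k::nat. real k + 1 < c ^ k) sequentially"
    using assms by real_asymp
  then show ?thesis
    using eventually_happens'[OF trivial_limit_sequentially] by blast
qed

text \<open>Ostrowski's criterion: bounding \<open>v (x + y) ^ k\<close> through the binomial expansion gives
  \<open>v (x + y) ^ k \<le> (k + 1) * max (v x) (v y) ^ k\<close>, and the linear factor disappears
  after taking \<open>k\<close>-th roots as \<open>k \<rightarrow> \<infinity>\<close>.\<close>

lemma ultrametric_if_bounded_on_ints:
  fixes v :: "'k::field \<Rightarrow> real"
  assumes av: "abs_value v" and le1: "\<And>n::int. v (of_int n) \<le> 1"
  shows "ultrametric v"
  unfolding ultrametric_def
proof (intro allI)
  fix x y :: 'k
  define M where "M = max (v x) (v y)"
  have M0: "M \<ge> 0" and vxy: "v x \<le> M" "v y \<le> M"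
    using abs_value_nonneg[OF av, of x] by (auto simp: M_def)
  have bound: "v (x + y) ^ k \<le> (real k + 1) * M ^ k" for k
  proof -
    have "v (x + y) ^ k = v ((x + y) ^ k)"
      by (simp add: abs_value_power[OF av])
    also have "\<dots> = v (\<Sum>i\<le>k. of_nat (k choose i) * x ^ i * y ^ (k - i))"
      by (simp add: binomial_ring)
    also have "\<dots> \<le> (\<Sum>i\<le>k. v (of_nat (k choose i) * x ^ i * y ^ (k - i)))"
      by (rule abs_value_sum_le[OF av])
    also have "\<dots> \<le> (\<Sum>i\<le>k. M ^ k)"
    proof (rule sum_mono)
      fix i assume "i \<in> {..k}"
      have "v (of_nat (k choose i) * x ^ i * y ^ (k - i))
          = v (of_int (int (k choose i))) * (v x ^ i * v y ^ (k - i))"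
        by (simp add: abs_value_mult[OF av] abs_value_power[OF av])
      also have "\<dots> \<le> 1 * (M ^ i * M ^ (k - i))"
      proof (rule mult_mono)
        have "v x ^ i \<le> M ^ i" "v y ^ (k - i) \<le> M ^ (k - i)"
          using vxy abs_value_nonneg[OF av] by (simp_all add: power_mono)
        then show "v x ^ i * v y ^ (k - i) \<le> M ^ i * M ^ (k - i)"
          using M0 abs_value_nonneg[OF av] by (simp add: mult_mono)
      qed (use le1[of "int (k choose i)"] abs_value_nonneg[OF av] in auto)
      also have "\<dots> = M ^ k"
        using \<open>i \<in> {..k}\<close> by (simp add: power_add[symmetric])
      finally show "v (of_nat (k choose i) * x ^ i * y ^ (k - i)) \<le> M ^ k" .
    qed
    finally show ?thesis by (simp add: add.commute)
  qed
  show "v (x + y) \<le> M"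
  proof (rule ccontr)
    assume "\<not> v (x + y) \<le> M"
    then have gt: "v (x + y) > M" by simp
    have "M > 0"
    proof (rule ccontr)
      assume "\<not> M > 0"
      then have "v x = 0" "v y = 0"
        using M0 vxy abs_value_nonneg[OF av, of x] abs_value_nonneg[OF av, of y] by linarith+
      then show False
        using gt M0 by (simp add: abs_value_eq_0_iff[OF av] abs_value_0[OF av])
    qed
    with gt have "v (x + y) / M > 1" by simp
    then obtain k where "(v (x + y) / M) ^ k > real k + 1"
      using power_gt_linear by blast
    then have "v (x + y) ^ k > (real k + 1) * M ^ k"
      using \<open>M > 0\<close> by (simp add: power_divide field_simps)
    then show False using bound[of k] by simp
  qed
qed

context
  fixes v :: "'k::field \<Rightarrow> real"
  assumes av: "abs_value v" and um: "ultrametric v"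
begin

lemma ultrametric_add_le: "v (x + y) \<le> max (v x) (v y)"
  using um unfolding ultrametric_def by blast

lemma ultrametric_diff_le: "v (x - y) \<le> max (v x) (v y)"
  using ultrametric_add_le[of x "-y"] abs_value_minus[OF av] by simp

lemma ultrametric_add_eq_left:
  assumes "v y < v x"
  shows "v (x + y) = v x"
proof -
  have "v x \<le> max (v (x + y)) (v y)"
    using ultrametric_add_le[of "x + y" "-y"] abs_value_minus[OF av] by simp
  then show ?thesis
    using ultrametric_add_le[of x y] assms by (simp add: max_def split: if_splits)
qed

lemma ultrametric_diff_eq_left: "v y < v x \<Longrightarrow> v (x - y) = v x"
  using ultrametric_add_eq_left[of "-y" x] abs_value_minus[OF av] by simp

lemma ultrametric_diff_eq_right: "v x < v y \<Longrightarrow> v (x - y) = v y"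
  using ultrametric_diff_eq_left[of x y] abs_value_minus[OF av, of "x - y"] by simp

lemma ultrametric_sum_less:
  assumes "finite S" "m > 0" "\<forall>i\<in>S. v (f i) < m"
  shows "v (sum f S) < m"
  using assms(1,3)
proof (induction S rule: finite_induct)
  case empty
  then show ?case using assms(2) abs_value_0[OF av] by simp
next
  case (insert x F)
  then show ?case
    using ultrametric_add_le[of "f x" "sum f F"] by (simp add: max_def split: if_splits)
qed

lemma ultrametric_root_two_maximal_terms:
  fixes c :: "nat \<Rightarrow> 'k"
  assumes x0: "x \<noteq> 0" and nz: "\<exists>i\<le>n. c i \<noteq> 0" and root: "(\<Sum>i\<le>n. c i * x ^ i) = 0"
  shows "\<exists>i j. i < j \<and> j \<le> n \<and> c i \<noteq> 0 \<and> c j \<noteq> 0 \<and> v (c i) * v x ^ i = v (c j) * v x ^ j"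
proof -
  define T where "T i = v (c i * x ^ i)" for i
  define m where "m = Max (T ` {..n})"
  have "m \<in> T ` {..n}"
    unfolding m_def by (intro Max_in) auto
  then obtain i0 where i0: "i0 \<le> n" "T i0 = m" by auto
  have Tle: "T i \<le> m" if "i \<le> n" for i
    using that by (simp add: m_def)
  have T_eq: "T i = v (c i) * v x ^ i" for i
    by (simp add: T_def abs_value_mult[OF av] abs_value_power[OF av])
  obtain i1 where "i1 \<le> n" "c i1 \<noteq> 0" using nz by blast
  then have "m > 0"
    using Tle[of i1] abs_value_pos[OF av, of "c i1 * x ^ i1"] x0 by (simp add: T_def)
  have c_nz: "c i \<noteq> 0" if "T i = m" for i
    using that \<open>m > 0\<close> by (auto simp: T_def abs_value_0[OF av])
  have "\<exists>j\<le>n. j \<noteq> i0 \<and> T j = m"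
  proof (rule ccontr)
    assume "\<not> ?thesis"
    then have "T i < m" if "i \<in> {..n} - {i0}" for i
      using that Tle[of i] by fastforce
    then have "\<forall>i\<in>{..n} - {i0}. v (c i * x ^ i) < m"
      by (simp add: T_def)
    then have "v (\<Sum>i\<in>{..n} - {i0}. c i * x ^ i) < m"
      using \<open>m > 0\<close> by (intro ultrametric_sum_less) auto
    then have "v (c i0 * x ^ i0 + (\<Sum>i\<in>{..n} - {i0}. c i * x ^ i)) = m"
      using ultrametric_add_eq_left i0(2) by (simp add: T_def)
    then show False
      using root \<open>m > 0\<close> i0(1) by (simp add: sum.remove abs_value_0[OF av])
  qed
  then obtain j where j: "j \<le> n" "j \<noteq> i0" "T j = m" by blast
  have nz_ij: "c i0 \<noteq> 0" "c j \<noteq> 0" and eq: "v (c i0) * v x ^ i0 = v (c j) * v x ^ j"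
    using i0(2) j(3) c_nz T_eq[of i0] T_eq[of j] by auto
  consider "i0 < j" | "j < i0"
    using j(2) by linarith
  then show ?thesis
  proof cases
    case 1
    then show ?thesis using i0(1) j(1) nz_ij eq by blast
  next
    case 2
    then show ?thesis using i0(1) j(1) nz_ij eq[symmetric] by blast
  qed
qed

end

section \<open>Linear dependence in number fields\<close>

lemma homogeneous_system_nontrivial_solution:
  fixes B :: "'j set" and I :: "'i set" and a :: "'i \<Rightarrow> 'j \<Rightarrow> 'f::field"
  assumes "finite B" "finite I" "card B < card I"
  shows "\<exists>q. (\<exists>i\<in>I. q i \<noteq> 0) \<and> (\<forall>b\<in>B. (\<Sum>i\<in>I. q i * a i b) = 0)"
  using assms
proof (induction B arbitrary: I a rule: finite_induct)
  case empty
  then have "I \<noteq> {}" by auto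
  then show ?case by (intro exI[of _ "\<lambda>_. 1"]) auto
next
  case (insert b B)
  show ?case
  proof (cases "\<forall>i\<in>I. a i b = 0")
    case True
    then show ?thesis
      using insert.IH[of I a] insert.prems insert.hyps by auto
  next
    case False
    then obtain i0 where i0: "i0 \<in> I" "a i0 b \<noteq> 0" by blast
    \<comment> \<open>Gaussian elimination: use the equation for \<open>b\<close> to eliminate the unknown \<open>q i0\<close>.\<close>
    define a' where "a' i c = a i c - a i b / a i0 b * a i0 c" for i c
    obtain q' where q': "\<exists>i\<in>I - {i0}. q' i \<noteq> 0" "\<forall>c\<in>B. (\<Sum>i\<in>I - {i0}. q' i * a' i c) = 0"
      using insert.IH[of "I - {i0}" a'] insert.prems insert.hyps i0 by (auto simp: less_diff_conv)
    define S where "S = (\<Sum>i\<in>I - {i0}. q' i * a i b)"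
    define q where "q i = (if i = i0 then - S / a i0 b else q' i)" for i
    have split: "(\<Sum>i\<in>I. q i * a i c) = q i0 * a i0 c + (\<Sum>i\<in>I - {i0}. q' i * a i c)" for c
      using i0(1) insert.prems(1) by (simp add: sum.remove q_def)
    have "(\<Sum>i\<in>I. q i * a i c) = 0" if "c \<in> B" for c
    proof -
      have "0 = (\<Sum>i\<in>I - {i0}. q' i * a' i c)"
        using q'(2) that by simp
      also have "\<dots> = (\<Sum>i\<in>I - {i0}. q' i * a i c) - S / a i0 b * a i0 c"
        unfolding a'_def S_def
        by (simp add: algebra_simps sum_subtractf sum_distrib_left sum_distrib_right sum_divide_distrib)
      finally show ?thesis
        using split[of c] by (simp add: q_def)
    qed
    moreover have "(\<Sum>i\<in>I. q i * a i b) = 0"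
      using split[of b] i0(2) by (simp add: q_def S_def)
    moreover have "\<exists>i\<in>I. q i \<noteq> 0"
      using q'(1) by (auto simp: q_def)
    ultimately show ?thesis by blast
  qed
qed

lemma rational_dependence_if_spanning:
  fixes B :: "'k::field_char_0 set" and y :: "'i \<Rightarrow> 'k"
  assumes "finite B" and span: "\<forall>x::'k. \<exists>c::'k \<Rightarrow> rat. x = (\<Sum>b\<in>B. of_rat (c b) * b)"
    and "finite I" "card B < card I"
  shows "\<exists>q::'i \<Rightarrow> rat. (\<exists>i\<in>I. q i \<noteq> 0) \<and> (\<Sum>i\<in>I. of_rat (q i) * y i) = 0"
proof -
  obtain C where C: "\<And>x. x = (\<Sum>b\<in>B. of_rat (C x b) * b)"
    using span by metis
  obtain q where q: "\<exists>i\<in>I. q i \<noteq> 0" "\<forall>b\<in>B. (\<Sum>i\<in>I. q i * C (y i) b) = 0"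
    using homogeneous_system_nontrivial_solution[OF assms(1,3,4), of "\<lambda>i b. C (y i) b"] by blast
  have "(\<Sum>i\<in>I. of_rat (q i) * y i) = (\<Sum>i\<in>I. of_rat (q i) * (\<Sum>b\<in>B. of_rat (C (y i) b) * b))"
    using C by metis
  also have "\<dots> = (\<Sum>b\<in>B. of_rat (\<Sum>i\<in>I. q i * C (y i) b) * b)"
    by (simp add: sum_distrib_left sum_distrib_right of_rat_mult of_rat_sum mult.assoc sum.swap[of _ I])
  also have "\<dots> = 0"
    using q(2) by simp
  finally show ?thesis
    using q(1) by blast
qed

lemma number_field_spanning_set:
  assumes "number_field TYPE('k)"
  obtains B :: "'k::field_char_0 set" where "finite B" "\<forall>x::'k. \<exists>c::'k \<Rightarrow> rat. x = (\<Sum>b\<in>B. of_rat (c b) * b)"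
  using assms unfolding number_field_def by blast

lemma number_field_algebraic_bounded_degree:
  assumes "number_field TYPE('k)"
  shows "\<exists>n. \<forall>x::'k::field_char_0. \<exists>c::nat \<Rightarrow> rat.
    (\<exists>i\<le>n. c i \<noteq> 0) \<and> (\<Sum>i\<le>n. of_rat (c i) * x ^ i) = 0"
proof -
  obtain B :: "'k set" where "finite B" "\<forall>x::'k. \<exists>c::'k \<Rightarrow> rat. x = (\<Sum>b\<in>B. of_rat (c b) * b)"
    using number_field_spanning_set[OF assms] by blast
  then have "\<exists>c::nat \<Rightarrow> rat. (\<exists>i\<le>card B. c i \<noteq> 0) \<and> (\<Sum>i\<le>card B. of_rat (c i) * x ^ i) = 0"
    for x :: 'k
    using rational_dependence_if_spanning[of B "{..card B}" "\<lambda>i. x ^ i"] by auto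
  then show ?thesis by blast
qed

section \<open>Absolute values with a common restriction\<close>

lemma ln_power_int: "c > 0 \<Longrightarrow> ln (c powi m) = of_int m * ln (c::real)"
  by (simp add: powr_real_of_int'[symmetric] ln_powr)

text \<open>Two distinct absolute values agreeing at an element \<open>\<rho>\<close> with \<open>|\<rho>| > 1\<close> are
  inequivalent, so some \<open>y ^ k * \<rho> ^ m\<close> is large for one and small for the other.\<close>

lemma separate_two_abs_values:
  fixes v w :: "'k::field \<Rightarrow> real"
  assumes av: "abs_value v" and aw: "abs_value w" and "v \<noteq> w"
    and vr: "v \<rho> = c" and wr: "w \<rho> = c" and c1: "c > 1"
  shows "\<exists>x. v x > 1 \<and> w x < 1"
proof -
  have "\<exists>y. v y > w y"
  proof -
    obtain y where y: "v y \<noteq> w y" using \<open>v \<noteq> w\<close> by blast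
    then have "y \<noteq> 0" by (auto simp: abs_value_0[OF av] abs_value_0[OF aw])
    then have "v y > w y \<or> v (inverse y) > w (inverse y)"
      using y abs_value_pos[OF av] abs_value_pos[OF aw]
      by (auto simp: abs_value_inverse[OF av] abs_value_inverse[OF aw] less_imp_inverse_less)
    then show ?thesis by blast
  qed
  then obtain y where "v y > w y" by blast
  define a b where "a = v y" and "b = w y"
  have "y \<noteq> 0"
    using \<open>v y > w y\<close> by (auto simp: abs_value_0[OF av] abs_value_0[OF aw])
  then have "b > 0" "a > b"
    using abs_value_pos[OF aw] \<open>v y > w y\<close> by (auto simp: a_def b_def)
  then obtain k where "c < (a / b) ^ k"
    using real_arch_pow[of "a / b" c] by auto
  then have kab: "ln c < real k * (ln a - ln b)"
    using c1 \<open>b > 0\<close> \<open>a > b\<close> by (simp add: ln_realpow ln_div flip: ln_less_cancel_iff)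
  have lnc: "ln c > 0" using c1 by simp
  \<comment> \<open>choose \<open>m\<close> with \<open>k ln b + m ln c \<in> [-ln c, 0)\<close>\<close>
  define s where "s = - real k * ln b / ln c"
  define m where "m = \<lceil>s\<rceil> - 1"
  have "of_int m * ln c < s * ln c" "(s - 1) * ln c \<le> of_int m * ln c"
    using lnc by (simp_all add: m_def) linarith+
  then have m: "of_int m * ln c < - real k * ln b" "- real k * ln b - ln c \<le> of_int m * ln c"
    using lnc by (simp_all add: s_def algebra_simps)
  define x where "x = y ^ k * \<rho> powi m"
  have "ln (v x) = real k * ln a + of_int m * ln c" "ln (w x) = real k * ln b + of_int m * ln c"
    using \<open>b > 0\<close> \<open>a > b\<close> c1 vr wr
    by (simp_all add: x_def a_def b_def abs_value_mult[OF av] abs_value_mult[OF aw]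
        abs_value_power[OF av] abs_value_power[OF aw] abs_value_power_int[OF av]
        abs_value_power_int[OF aw] ln_mult ln_realpow ln_power_int)
  then have "ln (v x) > 0" "ln (w x) < 0"
    using m kab by (simp_all add: algebra_simps)
  moreover have "v x > 0" "w x > 0"
    using \<open>y \<noteq> 0\<close> c1 vr by (auto simp: x_def abs_value_0[OF av] intro!: abs_value_pos[OF av] abs_value_pos[OF aw])
  ultimately have "v x > 1" "w x < 1"
    using ln_gt_zero_iff ln_less_zero_iff by blast+
  then show ?thesis by blast
qed

lemma eventually_power_gt:
  fixes a K :: real
  assumes "a > 1"
  shows "eventually (\<lambda>r. a ^ r > K) sequentially"
proof -
  obtain n where "K < a ^ n" using real_arch_pow[OF assms] by blast
  then have "\<forall>r\<ge>n. a ^ r > K"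
    using assms by (smt (verit) power_increasing)
  then show ?thesis unfolding eventually_sequentially by blast
qed

lemma eventually_abs_values_power_small:
  assumes "finite W" "\<forall>u\<in>W. abs_value u \<and> u y < 1"
  shows "eventually (\<lambda>r. \<forall>u\<in>W. u y ^ r * (u z + 1) < 1) sequentially"
proof (rule eventually_ball_finite[OF assms(1)], intro ballI)
  fix u assume "u \<in> W"
  then have "(\<lambda>r. u y ^ r * (u z + 1)) \<longlonglongrightarrow> 0 * (u z + 1)"
    using assms(2) abs_value_nonneg by (intro tendsto_mult LIMSEQ_realpow_zero) auto
  then show "eventually (\<lambda>r. u y ^ r * (u z + 1) < 1) sequentially"
    by (intro order_tendstoD(2)) auto
qed

text \<open>The induction step of weak approximation. Given \<open>y\<close>, large at \<open>v\<close> and small on \<open>W\<close>,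
  and \<open>z\<close>, large at \<open>v\<close> and small at \<open>w\<close>, the element \<open>y ^ r * z\<close> (if \<open>w y \<le> 1\<close>) or
  \<open>y ^ r * z / (1 + y ^ r)\<close> (if \<open>w y > 1\<close>) is large at \<open>v\<close> and small on \<open>insert w W\<close>
  for \<open>r\<close> large.\<close>

lemma separation_step_bounded:
  assumes av: "abs_value v" and aw: "abs_value w" and aW: "\<forall>u\<in>W. abs_value u" and "finite W"
    and y: "v y > 1" "\<forall>u\<in>W. u y < 1" "w y \<le> 1" and z: "v z > 1" "w z < 1"
  shows "\<exists>x. v x > 1 \<and> w x < 1 \<and> (\<forall>u\<in>W. u x < 1)"
proof -
  obtain r where r: "\<forall>u\<in>W. u y ^ r * (u z + 1) < 1"
    using eventually_happens'[OF trivial_limit_sequentially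
        eventually_abs_values_power_small[OF \<open>finite W\<close>, of y z]] aW y(2) by blast
  define x where "x = y ^ r * z"
  have "v x = v y ^ r * v z" "w x = w y ^ r * w z" "\<forall>u\<in>W. u x = u y ^ r * u z"
    using aW by (simp_all add: x_def abs_value_mult abs_value_power av aw)
  moreover have "1 < v y ^ r * v z"
    using y(1) z(1) one_le_power[of "v y" r] mult_le_less_imp_less[of 1 "v y ^ r" 1 "v z"] by simp
  moreover have "w y ^ r * w z < 1"
  proof -
    have "w y ^ r * w z \<le> 1 * w z"
      using y(3) abs_value_nonneg[OF aw] by (intro mult_right_mono power_le_one) auto
    then show ?thesis using z(2) by simp
  qed
  moreover have "u y ^ r * u z < 1" if "u \<in> W" for u
  proof -
    have "u y ^ r * u z \<le> u y ^ r * (u z + 1)"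
      using that aW abs_value_nonneg[of u y] by (intro mult_left_mono) auto
    then show ?thesis using r that by fastforce
  qed
  ultimately have "v x > 1 \<and> w x < 1 \<and> (\<forall>u\<in>W. u x < 1)"
    by simp
  then show ?thesis by blast
qed

lemma separation_step_unbounded:
  assumes av: "abs_value v" and aw: "abs_value w" and aW: "\<forall>u\<in>W. abs_value u" and "finite W"
    and y: "v y > 1" "\<forall>u\<in>W. u y < 1" "w y > 1" and z: "v z > 1" "w z < 1"
  shows "\<exists>x. v x > 1 \<and> w x < 1 \<and> (\<forall>u\<in>W. u x < 1)"
proof -
  have "eventually (\<lambda>r. v y ^ r > 1 / (v z - 1) + 1 \<and> w y ^ r > 1 / (1 - w z)
      \<and> (\<forall>u\<in>W. u y ^ r * (u z + 1) < 1)) sequentially"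
    using y z aW \<open>finite W\<close>
    by (intro eventually_conj eventually_power_gt eventually_abs_values_power_small) auto
  then obtain r where r: "v y ^ r > 1 / (v z - 1) + 1" "w y ^ r > 1 / (1 - w z)"
      "\<forall>u\<in>W. u y ^ r * (u z + 1) < 1"
    using eventually_happens'[OF trivial_limit_sequentially] by blast
  define Y where "Y = y ^ r"
  define x where "x = Y * z / (1 + Y)"
  have x_eq: "u x = u Y * u z / u (1 + Y)" and Y_eq: "u Y = u y ^ r"
    and bounds: "u Y - 1 \<le> u (1 + Y)" "1 - u Y \<le> u (1 + Y)" "u (1 + Y) \<le> 1 + u Y"
    if "abs_value u" for u
    using abs_value_reverse_triangle[OF that, of Y 1] abs_value_reverse_triangle[OF that, of 1 Y]
      abs_value_triangle[OF that, of 1 Y]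
    by (simp_all add: x_def Y_def abs_value_mult[OF that] abs_value_divide[OF that]
        abs_value_power[OF that] abs_value_1[OF that] add.commute)
  have "v Y > 1"
    using r(1) z(1) Y_eq[OF av] by (smt (verit) divide_pos_pos)
  moreover have "v Y * v z - v Y > 1"
    using r(1) z(1) Y_eq[OF av] by (simp add: field_simps)
  ultimately have "0 < v (1 + Y)" "v (1 + Y) < v Y * v z"
    using bounds[OF av] by linarith+
  then have "v x > 1"
    by (simp add: x_eq[OF av])
  moreover have "w Y - w Y * w z > 1"
    using r(2) z(2) Y_eq[OF aw] by (simp add: field_simps)
  then have "0 < w (1 + Y)" "w Y * w z < w (1 + Y)"
    using bounds[OF aw] abs_value_nonneg[OF aw, of Y] abs_value_nonneg[OF aw, of z]
    by (smt (verit) mult_nonneg_nonneg)+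
  then have "w x < 1"
    by (simp add: x_eq[OF aw])
  moreover have "u x < 1" if "u \<in> W" for u
  proof -
    have au: "abs_value u" using aW that by blast
    have "u Y * u z + u Y < 1"
      using r(3) that Y_eq[OF au] by (simp add: algebra_simps)
    then have "0 < u (1 + Y)" "u Y * u z < u (1 + Y)"
      using bounds[OF au] abs_value_nonneg[OF au, of Y] abs_value_nonneg[OF au, of z]
      by (smt (verit) mult_nonneg_nonneg)+
    then show ?thesis
      by (simp add: x_eq[OF au])
  qed
  ultimately show ?thesis by blast
qed

lemma separate_abs_values:
  fixes V :: "('k::field \<Rightarrow> real) set"
  assumes aV: "\<forall>u\<in>V. abs_value u" and \<rho>: "\<forall>u\<in>V. u \<rho> = c" and "c > 1" and "v \<in> V"
    and "finite W" "W \<subseteq> V - {v}"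
  shows "\<exists>y. v y > 1 \<and> (\<forall>u\<in>W. u y < 1)"
  using assms(5,6)
proof (induction W rule: finite_induct)
  case empty
  show ?case using \<rho> \<open>v \<in> V\<close> \<open>c > 1\<close> by (intro exI[of _ \<rho>]) auto
next
  case (insert w W)
  then have "w \<in> V" "w \<noteq> v" and aW: "\<forall>u\<in>W. abs_value u"
    using aV by auto
  then have av: "abs_value v" and aw: "abs_value w"
    using aV \<open>v \<in> V\<close> by auto
  obtain y where y: "v y > 1" "\<forall>u\<in>W. u y < 1"
    using insert by blast
  obtain z where z: "v z > 1" "w z < 1"
    using separate_two_abs_values[OF av aw _ _ _ \<open>c > 1\<close>] \<open>w \<noteq> v\<close> \<rho> \<open>v \<in> V\<close> \<open>w \<in> V\<close>
    by blast
  have "\<exists>x. v x > 1 \<and> w x < 1 \<and> (\<forall>u\<in>W. u x < 1)"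
  proof (cases "w y \<le> 1")
    case True
    show ?thesis by (rule separation_step_bounded[OF av aw aW insert(1) y True z])
  next
    case False
    then have wy: "w y > 1" by simp
    show ?thesis by (rule separation_step_unbounded[OF av aw aW insert(1) y wy z])
  qed
  then show ?case by auto
qed

text \<open>If a spanning set \<open>B\<close> had fewer elements than \<open>W\<close>, the elements \<open>y_v ^ r\<close>
  separating each \<open>v \<in> W\<close> from the others would satisfy a rational linear relation; at
  the place \<open>v\<close> where the common absolute value of the coefficients is attained, the term of \<open>v\<close>
  dominates all others for large \<open>r\<close>.\<close>

lemma card_abs_values_le_spanning_set:
  fixes B :: "'k::field_char_0 set" and V :: "('k \<Rightarrow> real) set"
  assumes "finite B" and span: "\<forall>x::'k. \<exists>c::'k \<Rightarrow> rat. x = (\<Sum>b\<in>B. of_rat (c b) * b)"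
    and aV: "\<forall>u\<in>V. abs_value u" and \<rho>: "\<forall>u\<in>V. u \<rho> = c" and "c > 1"
    and agree: "\<forall>u\<in>V. \<forall>u'\<in>V. \<forall>q. u (of_rat q) = u' (of_rat q)"
    and "finite W" "W \<subseteq> V"
  shows "card W \<le> card B"
proof (rule ccontr)
  assume "\<not> ?thesis"
  then have big: "card B < card W" and "W \<noteq> {}" by auto
  have "\<forall>v\<in>W. \<exists>y. v y > 1 \<and> (\<forall>u\<in>W - {v}. u y < 1)"
  proof
    fix v assume "v \<in> W"
    then show "\<exists>y. v y > 1 \<and> (\<forall>u\<in>W - {v}. u y < 1)"
      using separate_abs_values[OF aV \<rho> \<open>c > 1\<close>, of v "W - {v}"] \<open>finite W\<close> \<open>W \<subseteq> V\<close>
      by auto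
  qed
  then obtain y where y: "\<forall>v\<in>W. v (y v) > 1 \<and> (\<forall>u\<in>W - {v}. u (y v) < 1)"
    by (rule bchoice[THEN exE])
  define M where "M = Min ((\<lambda>v. v (y v)) ` W)"
  have "M > 1"
    using \<open>finite W\<close> \<open>W \<noteq> {}\<close> y by (simp add: M_def)
  have M_le: "M \<le> v (y v)" if "v \<in> W" for v
    using \<open>finite W\<close> that by (simp add: M_def)
  obtain r where r: "real (card W) < M ^ r"
    using real_arch_pow[OF \<open>M > 1\<close>] by blast
  obtain q where q: "\<exists>v\<in>W. q v \<noteq> 0" "(\<Sum>v\<in>W. of_rat (q v) * y v ^ r) = 0"
    using rational_dependence_if_spanning[OF \<open>finite B\<close> span \<open>finite W\<close> big, where y = "\<lambda>v. y v ^ r"]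
    by blast
  obtain v0 where "v0 \<in> W" using \<open>W \<noteq> {}\<close> by blast
  define R where "R v = v0 (of_rat (q v))" for v
  have "Max (R ` W) \<in> R ` W"
    using \<open>finite W\<close> \<open>W \<noteq> {}\<close> by simp
  then obtain vm where vm: "vm \<in> W" "R vm = Max (R ` W)" by auto
  have R_le: "R v \<le> R vm" if "v \<in> W" for v
    using that \<open>finite W\<close> by (simp add: vm(2))
  have avm: "abs_value vm" using aV \<open>W \<subseteq> V\<close> vm(1) by blast
  have R_vm: "vm (of_rat (q v)) = R v" for v
    unfolding R_def using agree \<open>W \<subseteq> V\<close> vm(1) \<open>v0 \<in> W\<close> by blast
  obtain v1 where "v1 \<in> W" "q v1 \<noteq> 0" using q(1) by blast
  then have "R vm > 0"
    using R_le[of v1] abs_value_pos[OF avm, of "of_rat (q v1)"] R_vm[of v1] by simp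
  define T where "T v = of_rat (q v) * y v ^ r" for v
  have T_vm: "vm (T v) = R v * vm (y v) ^ r" for v
    by (simp add: T_def abs_value_mult[OF avm] abs_value_power[OF avm] R_vm)
  have "vm (\<Sum>v\<in>W - {vm}. T v) \<le> (\<Sum>v\<in>W - {vm}. vm (T v))"
    by (rule abs_value_sum_le[OF avm])
  also have "\<dots> \<le> (\<Sum>v\<in>W - {vm}. R vm)"
  proof (rule sum_mono)
    fix v assume v: "v \<in> W - {vm}"
    then have "vm (y v) < 1"
      using y vm(1) by blast
    then have "vm (y v) ^ r \<le> 1"
      using abs_value_nonneg[OF avm] by (simp add: power_le_one)
    then have "R v * vm (y v) ^ r \<le> R vm * 1"
      using R_le[of v] v \<open>R vm > 0\<close> abs_value_nonneg[OF avm] by (intro mult_mono) auto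
    then show "vm (T v) \<le> R vm"
      by (simp add: T_vm)
  qed
  also have "\<dots> = (real (card W) - 1) * R vm"
  proof -
    have "card W \<ge> 1"
      using \<open>finite W\<close> vm(1) card_gt_0_iff[of W] by force
    then show ?thesis
      using \<open>finite W\<close> vm(1) by (simp add: card_Diff_singleton of_nat_diff)
  qed
  also have "\<dots> < R vm * M ^ r - R vm"
    using mult_strict_right_mono[OF r \<open>R vm > 0\<close>] by (simp add: algebra_simps)
  also have "R vm * M ^ r \<le> vm (T vm)"
    using M_le[OF vm(1)] \<open>M > 1\<close> \<open>R vm > 0\<close>
    by (simp add: T_vm power_mono)
  finally have "vm (\<Sum>v\<in>W - {vm}. T v) < vm (T vm) - R vm" by simp
  moreover have "T vm + (\<Sum>v\<in>W - {vm}. T v) = 0"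
    using q(2) vm(1) \<open>finite W\<close> by (simp add: T_def sum.remove)
  then have "T vm = - (\<Sum>v\<in>W - {vm}. T v)"
    by (simp add: add_eq_0_iff)
  then have "vm (T vm) = vm (\<Sum>v\<in>W - {vm}. T v)"
    by (simp add: abs_value_minus[OF avm])
  ultimately show False using \<open>R vm > 0\<close> by simp
qed

lemma finite_abs_values_same_restriction:
  fixes V :: "('k::field_char_0 \<Rightarrow> real) set"
  assumes "number_field TYPE('k)"
    and "\<forall>u\<in>V. abs_value u" and "\<forall>u\<in>V. u \<rho> = c" and "c > 1"
    and "\<forall>u\<in>V. \<forall>u'\<in>V. \<forall>q. u (of_rat q) = u' (of_rat q)"
  shows "finite V"
proof (rule ccontr)
  assume "infinite V"
  obtain B :: "'k set" where B: "finite B" "\<forall>x::'k. \<exists>c::'k \<Rightarrow> rat. x = (\<Sum>b\<in>B. of_rat (c b) * b)"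
    using number_field_spanning_set[OF assms(1)] by blast
  obtain W where W: "finite W" "card W = Suc (card B)" "W \<subseteq> V"
    using infinite_arbitrarily_large[OF \<open>infinite V\<close>] by blast
  then show False
    using card_abs_values_le_spanning_set[OF B assms(2-5) W(1,3)] by simp
qed

section \<open>The places of a number field\<close>

lemma abs_value_if_place: "v \<in> places \<Longrightarrow> abs_value v"
  unfolding places_def by blast

lemma padic_if_nonarchimedean_place:
  assumes "v \<in> places" "\<not> archimedean v"
  obtains p where "prime p" "extends_padic p v"
  using assms unfolding places_def archimedean_def by blast

lemma padic_abs_value_of_int:
  assumes "prime p" "extends_padic p v" "n \<noteq> 0"
  shows "v (of_int n) = real p powr (- real (multiplicity (int p) n))"
  using assms unfolding extends_padic_def by blast

lemma padic_abs_value_of_int_le_1: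
  assumes "abs_value v" "prime p" "extends_padic p v"
  shows "v (of_int n) \<le> 1"
proof (cases "n = 0")
  case False
  have "1 \<le> real p powr real (multiplicity (int p) n)"
    using prime_ge_1_nat[OF assms(2)] by (intro ge_one_powr_ge_zero) auto
  then show ?thesis
    using padic_abs_value_of_int[OF assms(2,3) False] by (simp add: powr_minus inverse_le_1_iff)
qed (simp add: abs_value_0[OF assms(1)])

lemma padic_abs_value_prime:
  assumes "prime p" "extends_padic p v"
  shows "v (of_int (int p)) = inverse (real p)"
  using padic_abs_value_of_int[OF assms, of "int p"] assms(1)
  by (simp add: prime_gt_0_nat powr_minus)

lemma ultrametric_if_nonarchimedean_place:
  assumes "v \<in> places" "\<not> archimedean v"
  shows "ultrametric v"
proof -
  obtain p where "prime p" "extends_padic p v"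
    using padic_if_nonarchimedean_place[OF assms] by blast
  then show ?thesis
    using abs_value_if_place[OF assms(1)]
    by (intro ultrametric_if_bounded_on_ints padic_abs_value_of_int_le_1)
qed

lemma finite_archimedean_places:
  assumes "number_field TYPE('k::field_char_0)"
  shows "finite {v::'k \<Rightarrow> real. v \<in> places \<and> archimedean v}" (is "finite ?V")
proof (rule finite_abs_values_same_restriction[OF assms, of _ "of_int 2" 2])
  show "\<forall>u\<in>?V. u (of_int 2) = 2"
  proof
    fix u assume "u \<in> ?V"
    then have "u (of_int 2) = \<bar>real_of_int 2\<bar>"
      unfolding archimedean_def extends_arch_def by blast
    then show "u (of_int 2) = 2" by simp
  qed
  show "\<forall>u\<in>?V. \<forall>u'\<in>?V. \<forall>q. u (of_rat q) = u' (of_rat q)"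
  proof (intro ballI allI)
    fix u u' q assume u: "u \<in> ?V" and u': "u' \<in> ?V"
    then have "u (of_int n) = u' (of_int n)" for n
      unfolding archimedean_def extends_arch_def by simp
    then show "u (of_rat q) = u' (of_rat q)"
      using u u' abs_value_if_place abs_values_agree_on_rats by blast
  qed
qed (use abs_value_if_place in auto)

lemma finite_places_over_prime:
  assumes "number_field TYPE('k::field_char_0)" and "prime p"
  shows "finite {v::'k \<Rightarrow> real. v \<in> places \<and> extends_padic p v}" (is "finite ?V")
proof (rule finite_abs_values_same_restriction[OF assms(1), of _ "inverse (of_int (int p))" "real p"])
  show "\<forall>u\<in>?V. u (inverse (of_int (int p))) = real p"
  proof
    fix u assume u: "u \<in> ?V"
    then have "u (of_int (int p)) = inverse (real p)"
      using padic_abs_value_prime[OF assms(2)] by blast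
    then show "u (inverse (of_int (int p))) = real p"
      using abs_value_inverse[OF abs_value_if_place, of u] u by simp
  qed
  show "\<forall>u\<in>?V. \<forall>u'\<in>?V. \<forall>q. u (of_rat q) = u' (of_rat q)"
  proof (intro ballI allI)
    fix u u' q assume u: "u \<in> ?V" and u': "u' \<in> ?V"
    have "u (of_int n) = u' (of_int n)" for n
      using u u' abs_value_0[OF abs_value_if_place, of u] abs_value_0[OF abs_value_if_place, of u']
      by (cases "n = 0") (auto simp: extends_padic_def)
    then show "u (of_rat q) = u' (of_rat q)"
      using u u' abs_value_if_place abs_values_agree_on_rats by blast
  qed
qed (use abs_value_if_place prime_gt_1_nat[OF assms(2)] in auto)

lemma quotient_of_nonzero:
  assumes "q \<noteq> 0" "quotient_of q = (a, b)"
  shows "a \<noteq> 0" "b \<noteq> 0"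
proof -
  show "b \<noteq> 0"
    using quotient_of_denom_pos[OF assms(2)] by simp
  show "a \<noteq> 0"
  proof
    assume "a = 0"
    then show False
      using quotient_of_div[OF assms(2)] assms(1) by simp
  qed
qed

lemma padic_abs_value_of_rat_eq_1:
  fixes v :: "'k::field_char_0 \<Rightarrow> real"
  assumes "abs_value v" "prime p" "extends_padic p v" and "q \<noteq> 0"
    and "\<not> int p dvd fst (quotient_of q)" "\<not> int p dvd snd (quotient_of q)"
  shows "v (of_rat q) = 1"
proof -
  obtain a b where ab: "quotient_of q = (a, b)"
    by (meson surj_pair)
  then have "a \<noteq> 0" "b \<noteq> 0"
    using \<open>q \<noteq> 0\<close> quotient_of_nonzero by blast+
  then have "v (of_int a) = 1" "v (of_int b) = 1"
    using assms(5,6) ab padic_abs_value_of_int[OF assms(2,3)] prime_gt_0_nat[OF assms(2)]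
    by (simp_all add: not_dvd_imp_multiplicity_0)
  then show ?thesis
    using abs_value_of_rat[OF assms(1) ab] by simp
qed

lemma finite_prime_divisors_of_rat:
  assumes "q \<noteq> 0"
  shows "finite {p::nat. int p dvd fst (quotient_of q) \<or> int p dvd snd (quotient_of q)}"
proof -
  obtain a b where ab: "quotient_of q = (a, b)"
    by (meson surj_pair)
  then have "a \<noteq> 0" "b \<noteq> 0"
    using \<open>q \<noteq> 0\<close> quotient_of_nonzero by blast+
  have "{p::nat. int p dvd a \<or> int p dvd b} \<subseteq> {..nat \<bar>a\<bar> + nat \<bar>b\<bar>}"
  proof
    fix p assume "p \<in> {p::nat. int p dvd a \<or> int p dvd b}"
    then have "\<bar>int p\<bar> \<le> \<bar>a\<bar> \<or> \<bar>int p\<bar> \<le> \<bar>b\<bar>"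
      using dvd_imp_le_int[OF \<open>a \<noteq> 0\<close>] dvd_imp_le_int[OF \<open>b \<noteq> 0\<close>] by blast
    then show "p \<in> {..nat \<bar>a\<bar> + nat \<bar>b\<bar>}" by auto
  qed
  then have "finite {p::nat. int p dvd a \<or> int p dvd b}"
    by (rule finite_subset) simp
  then show ?thesis
    using ab by simp
qed

lemma power_eq_power_imp_eq_1:
  fixes x :: real
  assumes "x > 0" "x ^ i = x ^ j" "i < j"
  shows "x = 1"
proof -
  have "x ^ j = x ^ i * x ^ (j - i)"
    using \<open>i < j\<close> by (simp flip: power_add)
  then have "x ^ (j - i) = 1"
    using assms(1,2) by simp
  then show ?thesis
    using power_eq_imp_eq_base[of x "j - i" 1] assms(1,3) by simp
qed

lemma ultrametric_root_unit:
  fixes v :: "'k::field \<Rightarrow> real" and c :: "nat \<Rightarrow> 'k"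
  assumes "abs_value v" "ultrametric v" "x \<noteq> 0"
    and "\<exists>i\<le>n. c i \<noteq> 0" "(\<Sum>i\<le>n. c i * x ^ i) = 0"
    and units: "\<And>i. i \<le> n \<Longrightarrow> c i \<noteq> 0 \<Longrightarrow> v (c i) = 1"
  shows "v x = 1"
proof -
  obtain i j where ij: "i < j" "j \<le> n" "c i \<noteq> 0" "c j \<noteq> 0"
    and eq: "v (c i) * v x ^ i = v (c j) * v x ^ j"
    using ultrametric_root_two_maximal_terms[OF assms(1-5)] by blast
  then have "v x ^ i = v x ^ j"
    using units[of i] units[of j] by simp
  then show ?thesis
    using power_eq_power_imp_eq_1 abs_value_pos[OF assms(1,3)] ij(1) by blast
qed

lemma finite_nonunit_places:
  fixes \<beta> :: "'k::field_char_0"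
  assumes nf: "number_field TYPE('k)" and "\<beta> \<noteq> 0"
  shows "finite {v::'k \<Rightarrow> real. v \<in> places \<and> \<not> archimedean v \<and> v \<beta> \<noteq> 1}"
proof -
  obtain n where "\<forall>x::'k. \<exists>c::nat \<Rightarrow> rat. (\<exists>i\<le>n. c i \<noteq> 0) \<and> (\<Sum>i\<le>n. of_rat (c i) * x ^ i) = 0"
    using number_field_algebraic_bounded_degree[OF nf] ..
  then obtain c :: "nat \<Rightarrow> rat" where c: "\<exists>i\<le>n. c i \<noteq> 0" "(\<Sum>i\<le>n. of_rat (c i) * \<beta> ^ i) = 0"
    by blast
  define P where "P = (\<Union>i\<in>{i. i \<le> n \<and> c i \<noteq> 0}.
      {p::nat. int p dvd fst (quotient_of (c i)) \<or> int p dvd snd (quotient_of (c i))})"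
  have "{v::'k \<Rightarrow> real. v \<in> places \<and> \<not> archimedean v \<and> v \<beta> \<noteq> 1}
      \<subseteq> (\<Union>p\<in>{p\<in>P. prime p}. {v. v \<in> places \<and> extends_padic p v})"
  proof
    fix v :: "'k \<Rightarrow> real"
    assume "v \<in> {v. v \<in> places \<and> \<not> archimedean v \<and> v \<beta> \<noteq> 1}"
    then have v: "v \<in> places" "\<not> archimedean v" "v \<beta> \<noteq> 1" by auto
    then have av: "abs_value v" and um: "ultrametric v"
      using abs_value_if_place ultrametric_if_nonarchimedean_place by auto
    obtain p where p: "prime p" "extends_padic p v"
      using padic_if_nonarchimedean_place[OF v(1,2)] by blast
    have "p \<in> P"
    proof (rule ccontr)
      assume "p \<notin> P"
      have units: "v (of_rat (c i)) = 1" if "i \<le> n" "of_rat (c i) \<noteq> (0::'k)" for i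
      proof (rule padic_abs_value_of_rat_eq_1[OF av p])
        show "c i \<noteq> 0" using that by simp
        then have "p \<notin> {p. int p dvd fst (quotient_of (c i)) \<or> int p dvd snd (quotient_of (c i))}"
          using \<open>p \<notin> P\<close> \<open>i \<le> n\<close> unfolding P_def by blast
        then show "\<not> int p dvd fst (quotient_of (c i))" "\<not> int p dvd snd (quotient_of (c i))"
          by simp_all
      qed
      have "\<exists>i\<le>n. (of_rat (c i) :: 'k) \<noteq> 0"
        using c(1) by simp
      then have "v \<beta> = 1"
        by (rule ultrametric_root_unit[OF av um \<open>\<beta> \<noteq> 0\<close> _ c(2) units])
      then show False using v by simp
    qed
    then show "v \<in> (\<Union>p\<in>{p\<in>P. prime p}. {v. v \<in> places \<and> extends_padic p v})"
      using p v by blast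
  qed
  moreover have "finite P"
    unfolding P_def using finite_prime_divisors_of_rat by simp
  then have "finite (\<Union>p\<in>{p\<in>P. prime p}. {v::'k \<Rightarrow> real. v \<in> places \<and> extends_padic p v})"
    using finite_places_over_prime[OF nf] by simp
  ultimately show ?thesis
    by (rule finite_subset)
qed

lemma ln_padic_abs_value_of_rat:
  fixes v :: "'k::field_char_0 \<Rightarrow> real"
  assumes "abs_value v" "prime p" "extends_padic p v" "q \<noteq> 0"
  shows "\<exists>m::int. ln (v (of_rat q)) = of_int m * ln (real p)"
proof -
  obtain a b where ab: "quotient_of q = (a, b)"
    by (meson surj_pair)
  then have "a \<noteq> 0" "b \<noteq> 0"
    using \<open>q \<noteq> 0\<close> quotient_of_nonzero by blast+
  then have "ln (v (of_rat q))
      = of_int (int (multiplicity (int p) b) - int (multiplicity (int p) a)) * ln (real p)"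
    using abs_value_of_rat[OF assms(1) ab] padic_abs_value_of_int[OF assms(2,3)] prime_gt_0_nat[OF assms(2)]
    by (simp add: ln_div algebra_simps)
  then show ?thesis by blast
qed

text \<open>At a place above \<open>p\<close>, every \<open>|x|\<close> is a rational power of \<open>p\<close> with bounded denominator:
  the two equal maximal terms of the minimal relation of \<open>x\<close> give
  \<open>(j - i) ln |x| \<in> \<int> ln p\<close> with \<open>j - i \<le> n\<close>, and \<open>j - i\<close> divides \<open>n!\<close>.\<close>

lemma padic_place_ln_discrete:
  fixes v :: "'k::field_char_0 \<Rightarrow> real"
  assumes nf: "number_field TYPE('k)" and av: "abs_value v" and p: "prime p" "extends_padic p v"
  shows "\<exists>N>0. \<forall>x. x \<noteq> 0 \<longrightarrow> (\<exists>m::int. real N * ln (v x) = of_int m * ln (real p))"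
proof -
  obtain n where n: "\<forall>x::'k. \<exists>c::nat \<Rightarrow> rat. (\<exists>i\<le>n. c i \<noteq> 0) \<and> (\<Sum>i\<le>n. of_rat (c i) * x ^ i) = 0"
    using number_field_algebraic_bounded_degree[OF nf] ..
  have um: "ultrametric v"
    using ultrametric_if_bounded_on_ints[OF av padic_abs_value_of_int_le_1[OF av p]] .
  have "\<exists>m::int. real (fact n) * ln (v x) = of_int m * ln (real p)" if "x \<noteq> 0" for x
  proof -
    obtain c :: "nat \<Rightarrow> rat" where c: "\<exists>i\<le>n. c i \<noteq> 0" "(\<Sum>i\<le>n. of_rat (c i) * x ^ i) = 0"
      using n by blast
    then have "\<exists>i\<le>n. (of_rat (c i) :: 'k) \<noteq> 0" by simp
    from ultrametric_root_two_maximal_terms[OF av um \<open>x \<noteq> 0\<close> this c(2)]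
    obtain i j where ij: "i < j" "j \<le> n" "c i \<noteq> 0" "c j \<noteq> 0"
      and eq: "v (of_rat (c i)) * v x ^ i = v (of_rat (c j)) * v x ^ j"
      by auto
    obtain mi where mi: "ln (v (of_rat (c i))) = of_int mi * ln (real p)"
      using ln_padic_abs_value_of_rat[OF av p ij(3)] by blast
    obtain mj where mj: "ln (v (of_rat (c j))) = of_int mj * ln (real p)"
      using ln_padic_abs_value_of_rat[OF av p ij(4)] by blast
    have pos: "v x > 0" "v (of_rat (c i)) > 0" "v (of_rat (c j)) > 0"
      using abs_value_pos[OF av] \<open>x \<noteq> 0\<close> ij(3,4) by simp_all
    have "ln (v (of_rat (c i))) + real i * ln (v x) = ln (v (of_rat (c j))) + real j * ln (v x)"
      using arg_cong[OF eq, of ln] pos by (simp add: ln_mult ln_realpow)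
    then have diff: "real (j - i) * ln (v x) = of_int (mi - mj) * ln (real p)"
      using mi mj ij(1) by (simp add: of_nat_diff algebra_simps)
    have "j - i dvd fact n"
      using ij(1,2) by (intro dvd_fact) auto
    then obtain t where "fact n = (j - i) * t"
      by (elim dvdE)
    then have "real (fact n) * ln (v x) = real t * (real (j - i) * ln (v x))"
      by simp
    also have "\<dots> = of_int (int t * (mi - mj)) * ln (real p)"
      using diff by simp
    finally have "real (fact n) * ln (v x) = of_int (int t * (mi - mj)) * ln (real p)" .
    then show ?thesis by blast
  qed
  then show ?thesis
    by (intro exI[of _ "fact n"]) simp
qed

lemma int_set_multiples_of_least:
  fixes G :: "int set"
  assumes diff: "\<And>a b. a \<in> G \<Longrightarrow> b \<in> G \<Longrightarrow> a - b \<in> G"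
    and mult: "\<And>a k. a \<in> G \<Longrightarrow> a * k \<in> G" and "m \<in> G" "m \<noteq> 0"
  obtains g where "g > 0" "g \<in> G" "\<And>a. a \<in> G \<Longrightarrow> g dvd a"
proof -
  define P where "P k \<longleftrightarrow> k > 0 \<and> int k \<in> G" for k :: nat
  define g where "g = (LEAST k. P k)"
  have "m * sgn m = \<bar>m\<bar>"
    by (simp add: sgn_if abs_if)
  then have "P (nat \<bar>m\<bar>)"
    using mult[OF \<open>m \<in> G\<close>, of "sgn m"] \<open>m \<noteq> 0\<close> by (simp add: P_def)
  then have "P g"
    unfolding g_def by (rule LeastI)
  then have g: "g > 0" "int g \<in> G"
    by (simp_all add: P_def)
  have "int g dvd a" if "a \<in> G" for a
  proof -
    define r where "r = a mod int g"
    have "r = a - int g * (a div int g)"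
      by (simp add: r_def minus_mult_div_eq_mod)
    then have "r \<in> G"
      using diff[OF that mult[OF g(2)]] by simp
    have "r = 0"
    proof (rule ccontr)
      assume "r \<noteq> 0"
      moreover have "0 \<le> r" "r < int g"
        using g(1) by (simp_all add: r_def)
      ultimately have "P (nat r)" "nat r < g"
        using \<open>r \<in> G\<close> by (simp_all add: P_def)
      then show False
        unfolding g_def using not_less_Least by blast
    qed
    then show ?thesis by (simp add: r_def dvd_eq_mod_eq_0)
  qed
  then show thesis
    using that[of "int g"] g by simp
qed

text \<open>If \<open>ln |K^*|\<close> lies in a lattice \<open>\<int> L\<close>, it is a lattice \<open>\<int> g L\<close> and the inverse of
  an element of absolute value \<open>e ^ (g L)\<close> is a uniformizer.\<close>

lemma uniformizer_if_ln_discrete: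
  fixes v :: "'k::field \<Rightarrow> real"
  assumes av: "abs_value v" and "L > 0"
    and disc: "\<And>x. x \<noteq> 0 \<Longrightarrow> \<exists>m::int. ln (v x) = of_int m * L" and "x0 \<noteq> 0" "v x0 \<noteq> 1"
  shows "\<exists>\<pi>. uniformizer v \<pi>"
proof -
  define G where "G = {m::int. \<exists>x. x \<noteq> 0 \<and> ln (v x) = of_int m * L}"
  have G_iff: "m \<in> G \<longleftrightarrow> (\<exists>x. x \<noteq> 0 \<and> ln (v x) = of_int m * L)" for m
    by (simp add: G_def)
  have G_diff: "a - b \<in> G" if "a \<in> G" "b \<in> G" for a b
  proof -
    from that(1) have "\<exists>x. x \<noteq> 0 \<and> ln (v x) = of_int a * L"
      by (simp add: G_def)
    then obtain x where x: "x \<noteq> 0" "ln (v x) = of_int a * L"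
      by blast
    from that(2) have "\<exists>y. y \<noteq> 0 \<and> ln (v y) = of_int b * L"
      by (simp add: G_def)
    then obtain y where y: "y \<noteq> 0" "ln (v y) = of_int b * L"
      by blast
    have "ln (v (x / y)) = of_int (a - b) * L"
      using x y abs_value_pos[OF av x(1)] abs_value_pos[OF av y(1)]
      by (simp add: abs_value_divide[OF av] ln_div algebra_simps)
    moreover have "x / y \<noteq> 0"
      using x(1) y(1) by simp
    ultimately show ?thesis
      unfolding G_iff by blast
  qed
  have G_mult: "a * k \<in> G" if "a \<in> G" for a k
  proof -
    from that have "\<exists>x. x \<noteq> 0 \<and> ln (v x) = of_int a * L"
      by (simp add: G_def)
    then obtain x where x: "x \<noteq> 0" "ln (v x) = of_int a * L"
      by blast
    have "ln (v (x powi k)) = of_int (a * k) * L"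
      using x abs_value_pos[OF av x(1)] by (simp add: abs_value_power_int[OF av] ln_power_int)
    moreover have "x powi k \<noteq> 0"
      using x(1) by simp
    ultimately show ?thesis
      unfolding G_iff by blast
  qed
  obtain m0 where "ln (v x0) = of_int m0 * L"
    using disc[OF \<open>x0 \<noteq> 0\<close>] by blast
  moreover have "ln (v x0) \<noteq> 0"
    using \<open>v x0 \<noteq> 1\<close> abs_value_pos[OF av \<open>x0 \<noteq> 0\<close>] by simp
  ultimately have "m0 \<in> G" "m0 \<noteq> 0"
    using \<open>x0 \<noteq> 0\<close> G_iff[of m0] by auto
  obtain g where g: "g > 0" "g \<in> G" "\<And>a. a \<in> G \<Longrightarrow> g dvd a"
    using int_set_multiples_of_least[of G, OF G_diff G_mult \<open>m0 \<in> G\<close> \<open>m0 \<noteq> 0\<close>] by blast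
  then have "\<exists>x. x \<noteq> 0 \<and> ln (v x) = of_int g * L"
    by (simp add: G_def)
  then obtain xg where xg: "xg \<noteq> 0" "ln (v xg) = of_int g * L"
    by blast
  define \<pi> where "\<pi> = inverse xg"
  have "\<pi> \<noteq> 0" and ln_\<pi>: "ln (v \<pi>) = - of_int g * L"
    using xg abs_value_pos[OF av xg(1)] by (simp_all add: \<pi>_def abs_value_inverse[OF av] ln_inverse)
  have "v \<pi> > 0"
    using abs_value_pos[OF av \<open>\<pi> \<noteq> 0\<close>] .
  moreover have "ln (v \<pi>) < 0"
    using ln_\<pi> g(1) \<open>L > 0\<close> by (simp add: mult_pos_pos)
  ultimately have "v \<pi> < 1"
    by (simp add: ln_less_zero_iff)
  moreover have "\<exists>k. v x = v \<pi> powi k" if "x \<noteq> 0" for x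
  proof -
    obtain m where m: "ln (v x) = of_int m * L"
      using disc[OF \<open>x \<noteq> 0\<close>] by blast
    then have "m \<in> G"
      using that unfolding G_iff by blast
    then obtain j where "m = g * j"
      using g(3) by (auto elim: dvdE)
    then have "ln (v x) = ln (v \<pi> powi (- j))"
      using m ln_\<pi> \<open>v \<pi> > 0\<close> by (simp add: ln_power_int)
    then have "v x = v \<pi> powi (- j)"
      using abs_value_pos[OF av that] \<open>v \<pi> > 0\<close> by simp
    then show ?thesis by blast
  qed
  ultimately have "uniformizer v \<pi>"
    unfolding uniformizer_def using \<open>\<pi> \<noteq> 0\<close> by blast
  then show ?thesis ..
qed

lemma uniformizer_exists_if_padic:
  fixes v :: "'k::field_char_0 \<Rightarrow> real"
  assumes nf: "number_field TYPE('k)" and av: "abs_value v" and p: "prime p" "extends_padic p v"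
  shows "\<exists>\<pi>. uniformizer v \<pi>"
proof -
  obtain N :: nat where "N > 0" and N: "\<forall>x. x \<noteq> 0 \<longrightarrow> (\<exists>m::int. real N * ln (v x) = of_int m * ln (real p))"
    using padic_place_ln_discrete[OF assms] by auto
  have disc: "\<exists>m::int. ln (v x) = of_int m * (ln (real p) / real N)" if "x \<noteq> 0" for x
  proof -
    obtain m :: int where "real N * ln (v x) = of_int m * ln (real p)"
      using N \<open>x \<noteq> 0\<close> by auto
    then have "ln (v x) = of_int m * (ln (real p) / real N)"
      using \<open>N > 0\<close> by (simp add: field_simps)
    then show ?thesis ..
  qed
  have "(of_int (int p) :: 'k) \<noteq> 0" "v (of_int (int p)) \<noteq> 1"
    using padic_abs_value_prime[OF p] prime_gt_1_nat[OF p(1)] by simp_all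
  moreover have "ln (real p) / real N > 0"
    using prime_gt_1_nat[OF p(1)] \<open>N > 0\<close> by simp
  ultimately show ?thesis
    using uniformizer_if_ln_discrete[OF av _ disc] by blast
qed

lemma nval_eq:
  assumes av: "abs_value v" and ex: "\<exists>\<pi>. uniformizer v \<pi>"
    and eq: "v x = v (SOME \<pi>. uniformizer v \<pi>) powi k"
  shows "nval v x = k"
proof -
  define \<pi> where "\<pi> = (SOME \<pi>. uniformizer v \<pi>)"
  have "uniformizer v \<pi>"
    unfolding \<pi>_def using someI_ex[OF ex] .
  then have "v \<pi> > 0" "v \<pi> < 1"
    using abs_value_pos[OF av] unfolding uniformizer_def by auto
  then have "ln (v \<pi>) < 0"
    by simp
  have "k' = k" if "v \<pi> powi k' = v \<pi> powi k" for k'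
  proof -
    have "of_int k' * ln (v \<pi>) = of_int k * ln (v \<pi>)"
      using arg_cong[OF that, of ln] \<open>v \<pi> > 0\<close> by (simp add: ln_power_int)
    then show ?thesis
      using \<open>ln (v \<pi>) < 0\<close> by simp
  qed
  moreover have "v x = v \<pi> powi k"
    using eq by (simp add: \<pi>_def)
  ultimately show ?thesis
    unfolding nval_def \<pi>_def[symmetric] by (intro the_equality) auto
qed

lemma nval_power:
  assumes av: "abs_value v" and ex: "\<exists>\<pi>. uniformizer v \<pi>" and "z \<noteq> 0" and eq: "v t = v z ^ e"
  shows "nval v t = int e * nval v z"
proof -
  define \<pi> where "\<pi> = (SOME \<pi>. uniformizer v \<pi>)"
  have "uniformizer v \<pi>"
    unfolding \<pi>_def using someI_ex[OF ex] .
  then obtain k where k: "v z = v \<pi> powi k"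
    using \<open>z \<noteq> 0\<close> unfolding uniformizer_def by blast
  then have "v t = v \<pi> powi (k * int e)"
    using eq by (simp add: power_int_power')
  then show ?thesis
    using nval_eq[OF av ex] k unfolding \<pi>_def by simp
qed

section \<open>Local dynamics of the family\<close>

lemma abs_value_famf:
  "abs_value v \<Longrightarrow> v (famf e \<beta> t z) = (\<Prod>b\<leftarrow>\<beta>. v (z ^ e - b * t))"
  by (simp add: famf_def abs_value_prod_list comp_def)

lemma prod_list_between_powers:
  fixes f :: "'a \<Rightarrow> real"
  assumes "\<forall>x\<in>set xs. a \<le> f x \<and> f x \<le> c" "0 \<le> a"
  shows "a ^ length xs \<le> (\<Prod>x\<leftarrow>xs. f x) \<and> (\<Prod>x\<leftarrow>xs. f x) \<le> c ^ length xs"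
  using assms(1)
proof (induction xs)
  case (Cons x xs)
  then have "a \<le> f x" "f x \<le> c" "a ^ length xs \<le> (\<Prod>x\<leftarrow>xs. f x)" "(\<Prod>x\<leftarrow>xs. f x) \<le> c ^ length xs"
    by auto
  moreover have "0 \<le> a ^ length xs"
    using assms(2) by simp
  ultimately have "a * a ^ length xs \<le> f x * (\<Prod>x\<leftarrow>xs. f x)"
    "f x * (\<Prod>x\<leftarrow>xs. f x) \<le> c * c ^ length xs"
    using assms(2) by (intro mult_mono; linarith)+
  then show ?case by simp
qed simp

lemma ultrametric_famf_eq:
  assumes av: "abs_value v" and um: "ultrametric v" and small: "\<forall>b\<in>set \<beta>. v (b * t) < v z ^ e"
  shows "v (famf e \<beta> t z) = v z ^ (e * length \<beta>)"
proof -
  have "\<forall>b\<in>set \<beta>. v (z ^ e - b * t) = v z ^ e"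
    using small ultrametric_diff_eq_left[OF av um] by (simp add: abs_value_power[OF av])
  then have "(\<Prod>b\<leftarrow>\<beta>. v (z ^ e - b * t)) = (v z ^ e) ^ length \<beta>"
    by (induction \<beta>) auto
  then show ?thesis
    by (simp add: abs_value_famf[OF av] power_mult)
qed

lemma ultrametric_orbit_abs_value:
  assumes av: "abs_value v" and um: "ultrametric v" and "v z > 1" "e * length \<beta> > 0"
    and small: "\<forall>b\<in>set \<beta>. v (b * t) < v z ^ e"
  shows "v ((famf e \<beta> t ^^ n) z) = v z ^ ((e * length \<beta>) ^ n)"
proof (induction n)
  case (Suc n)
  define w where "w = (famf e \<beta> t ^^ n) z"
  have "1 \<le> (e * length \<beta>) ^ n"
    using \<open>e * length \<beta> > 0\<close> by (simp add: Suc_le_eq)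
  then have "v z ^ 1 \<le> v z ^ ((e * length \<beta>) ^ n)"
    using \<open>v z > 1\<close> by (intro power_increasing) simp_all
  then have "v z \<le> v w"
    using Suc by (simp add: w_def)
  then have "v z ^ e \<le> v w ^ e"
    using \<open>v z > 1\<close> by (simp add: power_mono)
  then have "\<forall>b\<in>set \<beta>. v (b * t) < v w ^ e"
    using small by fastforce
  then have "v (famf e \<beta> t w) = v w ^ (e * length \<beta>)"
    by (rule ultrametric_famf_eq[OF av um])
  then show ?case
    using Suc by (simp add: w_def mult.commute flip: power_mult)
qed simp

lemma ultrametric_orbit_le_1:
  assumes av: "abs_value v" and um: "ultrametric v" and "\<forall>b\<in>set \<beta>. v b \<le> 1" "v t \<le> 1" "v z \<le> 1"
  shows "v ((famf e \<beta> t ^^ n) z) \<le> 1"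
proof (induction n)
  case (Suc n)
  define w where "w = (famf e \<beta> t ^^ n) z"
  have "\<forall>b\<in>set \<beta>. 0 \<le> v (w ^ e - b * t) \<and> v (w ^ e - b * t) \<le> 1"
  proof
    fix b assume "b \<in> set \<beta>"
    have "v (w ^ e) \<le> 1" "v (b * t) \<le> 1"
      using Suc assms(3-4) \<open>b \<in> set \<beta>\<close> abs_value_nonneg[OF av]
      by (simp_all add: w_def abs_value_power[OF av] abs_value_mult[OF av] power_le_one mult_le_one)
    then show "0 \<le> v (w ^ e - b * t) \<and> v (w ^ e - b * t) \<le> 1"
      using ultrametric_diff_le[OF av um, of "w ^ e" "b * t"] abs_value_nonneg[OF av] by simp
  qed
  then show ?case
    using prod_list_between_powers[of \<beta> 0 _ 1] by (simp add: w_def abs_value_famf[OF av])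
qed (simp add: assms(5))

lemma famf_abs_value_bounds:
  fixes v :: "'k::field \<Rightarrow> real"
  assumes av: "abs_value v" and w: "v w ^ e \<ge> 2 * sum_list (map v \<beta>) * max 1 (v t)"
  shows "v w ^ (e * length \<beta>) / 2 ^ length \<beta> \<le> v (famf e \<beta> t w)
    \<and> v (famf e \<beta> t w) \<le> 2 ^ length \<beta> * v w ^ (e * length \<beta>)"
proof -
  have "\<forall>b\<in>set \<beta>. v w ^ e / 2 \<le> v (w ^ e - b * t) \<and> v (w ^ e - b * t) \<le> 2 * v w ^ e"
  proof
    fix b assume "b \<in> set \<beta>"
    then have "v b \<le> sum_list (map v \<beta>)"
      using abs_value_nonneg[OF av] by (intro member_le_sum_list) auto
    moreover have "0 \<le> v b" "0 \<le> v t"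
      using abs_value_nonneg[OF av] by auto
    ultimately have "v b * v t \<le> sum_list (map v \<beta>) * max 1 (v t)"
      by (intro mult_mono) auto
    then have "v (b * t) \<le> v w ^ e / 2"
      using w by (simp add: abs_value_mult[OF av])
    then show "v w ^ e / 2 \<le> v (w ^ e - b * t) \<and> v (w ^ e - b * t) \<le> 2 * v w ^ e"
      using abs_value_reverse_triangle_diff[OF av, of "w ^ e" "b * t"]
        abs_value_diff_le[OF av, of "w ^ e" "b * t"] abs_value_nonneg[OF av, of "b * t"]
      by (simp add: abs_value_power[OF av])
  qed
  moreover have "0 \<le> v w ^ e / 2"
    using abs_value_nonneg[OF av, of w] by simp
  ultimately have "(v w ^ e / 2) ^ length \<beta> \<le> v (famf e \<beta> t w)
      \<and> v (famf e \<beta> t w) \<le> (2 * v w ^ e) ^ length \<beta>"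
    unfolding abs_value_famf[OF av] by (rule prod_list_between_powers)
  then show ?thesis
    by (simp add: power_divide power_mult power_mult_distrib)
qed

lemma famf_archimedean_region_invariant:
  fixes v :: "'k::field \<Rightarrow> real"
  assumes av: "abs_value v" and "e * length \<beta> \<ge> 2"
    and w: "v w > 2 ^ length \<beta>" "v w ^ e \<ge> 2 * sum_list (map v \<beta>) * max 1 (v t)"
  shows "v (famf e \<beta> t w) \<ge> v w" "v (famf e \<beta> t w) > 2 ^ length \<beta>"
    "v (famf e \<beta> t w) ^ e \<ge> 2 * sum_list (map v \<beta>) * max 1 (v t)"
proof -
  have "v w \<ge> 1"
    using w(1) one_le_power[of "2::real" "length \<beta>"] by linarith
  have "v w * 2 ^ length \<beta> \<le> v w ^ 2"
    using w(1) \<open>v w \<ge> 1\<close> by (simp add: power2_eq_square)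
  also have "\<dots> \<le> v w ^ (e * length \<beta>)"
    using \<open>v w \<ge> 1\<close> assms(2) by (rule power_increasing[rotated])
  finally have "v w \<le> v w ^ (e * length \<beta>) / 2 ^ length \<beta>"
    by (simp add: le_divide_eq)
  then show fw: "v (famf e \<beta> t w) \<ge> v w"
    using famf_abs_value_bounds[OF av w(2)] by linarith
  then show "v (famf e \<beta> t w) > 2 ^ length \<beta>"
    using w(1) by linarith
  have "v w ^ e \<le> v (famf e \<beta> t w) ^ e"
    using fw \<open>v w \<ge> 1\<close> by (intro power_mono) auto
  then show "v (famf e \<beta> t w) ^ e \<ge> 2 * sum_list (map v \<beta>) * max 1 (v t)"
    using w(2) by linarith
qed

lemma logp_eq_ln: "x \<ge> 1 \<Longrightarrow> logp x = ln x"
  by (simp add: logp_def)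

lemma green_eq_0_if_orbit_bounded:
  assumes "\<forall>n. v ((g ^^ n) z) \<le> 1"
  shows "green d g v z = 0"
  using assms by (simp add: green_def logp_def max_absorb1)

lemma green_eq_ln_if_orbit_power:
  assumes "c > 1" "d > 0" and orbit: "\<forall>n. v ((g ^^ n) z) = c ^ (d ^ n)"
  shows "green d g v z = ln c"
proof -
  have "logp (v ((g ^^ n) z)) / real d ^ n = ln c" for n
    using orbit \<open>c > 1\<close> \<open>d > 0\<close> by (simp add: logp_eq_ln ln_realpow)
  then show ?thesis
    by (simp add: green_def)
qed

lemma green_eq_ln_div_if_shifted_orbit_power:
  assumes "c > 1" "d > 0" and orbit: "\<forall>n. v ((g ^^ n) (g z)) = c ^ (d ^ n)"
  shows "green d g v z = ln c / real d"
proof -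
  have "logp (v ((g ^^ Suc n) z)) / real d ^ Suc n = ln c / real d" for n
    using orbit \<open>c > 1\<close> \<open>d > 0\<close>
    by (simp add: logp_eq_ln ln_realpow funpow_Suc_right del: funpow.simps)
  then have "(\<lambda>n. logp (v ((g ^^ Suc n) z)) / real d ^ Suc n) \<longlonglongrightarrow> ln c / real d"
    by simp
  then have "(\<lambda>n. logp (v ((g ^^ n) z)) / real d ^ n) \<longlonglongrightarrow> ln c / real d"
    by (rule filterlim_sequentially_Suc[THEN iffD1])
  then show ?thesis
    unfolding green_def by (rule limI)
qed

lemma infinite_orbit_if_orbit_power:
  fixes c :: real
  assumes "c > 1" "d \<ge> 2" and orbit: "\<forall>n. v ((g ^^ n) w) = c ^ (d ^ n)"
  shows "infinite {(g ^^ n) w | n. True}"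
proof -
  have "strict_mono (\<lambda>n. c ^ (d ^ n))"
    using assms(1,2) by (intro strict_monoI power_strict_increasing) auto
  then have "inj (\<lambda>n. (g ^^ n) w)"
    using orbit by (metis (mono_tags, lifting) injI strict_mono_eq)
  then have "infinite (range (\<lambda>n. (g ^^ n) w))"
    by (rule range_inj_infinite)
  moreover have "{(g ^^ n) w | n. True} = range (\<lambda>n. (g ^^ n) w)"
    by auto
  ultimately show ?thesis by simp
qed

text \<open>If \<open>a (n + 1)\<close> differs from \<open>D * a n\<close> by at most \<open>C\<close>, the increments of
  \<open>a n / D ^ n\<close> are bounded by \<open>C / D ^ (n + 1)\<close>, which sum to \<open>C / (D - 1) \<le> C\<close>.\<close>

lemma lim_divide_power_near_initial:
  fixes a :: "nat \<Rightarrow> real" and D C :: real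
  assumes "D \<ge> 2" and step: "\<forall>n. \<bar>a (Suc n) - D * a n\<bar> \<le> C"
  shows "\<bar>lim (\<lambda>n. a n / D ^ n) - a 0\<bar> \<le> C"
proof -
  have "C \<ge> 0" using step by (meson abs_ge_zero order_trans)
  define b where "b n = a n / D ^ n" for n
  define \<delta> where "\<delta> n = b (Suc n) - b n" for n
  define g where "g n = (C / D) * (1 / D) ^ n" for n
  have \<delta>_le: "\<bar>\<delta> n\<bar> \<le> g n" for n
  proof -
    have "\<delta> n = (a (Suc n) - D * a n) / D ^ Suc n"
      using \<open>D \<ge> 2\<close> by (simp add: \<delta>_def b_def field_simps)
    then have "\<bar>\<delta> n\<bar> = \<bar>a (Suc n) - D * a n\<bar> / D ^ Suc n"
      using \<open>D \<ge> 2\<close> by (simp add: abs_divide)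
    also have "\<dots> \<le> C / D ^ Suc n"
      using step \<open>D \<ge> 2\<close> by (intro divide_right_mono) auto
    also have "\<dots> = g n"
      using \<open>D \<ge> 2\<close> by (simp add: g_def power_divide field_simps)
    finally show ?thesis .
  qed
  have q: "norm (1 / D) < 1" using \<open>D \<ge> 2\<close> by simp
  have "summable g"
    unfolding g_def by (intro summable_mult summable_geometric q)
  then have sa: "summable (\<lambda>n. \<bar>\<delta> n\<bar>)"
    by (rule summable_comparison_test[rotated]) (use \<delta>_le in auto)
  have "(\<lambda>n. b 0 + (\<Sum>i<n. \<delta> i)) \<longlonglongrightarrow> b 0 + suminf \<delta>"
    using summable_rabs_cancel[OF sa] by (intro tendsto_add tendsto_const summable_LIMSEQ)
  moreover have "(\<lambda>n. b 0 + (\<Sum>i<n. \<delta> i)) = b"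
    by (rule ext) (simp add: \<delta>_def sum_lessThan_telescope)
  ultimately have "lim b = b 0 + suminf \<delta>"
    by (simp add: limI)
  have "\<bar>suminf \<delta>\<bar> \<le> (\<Sum>n. \<bar>\<delta> n\<bar>)"
    by (rule summable_rabs[OF sa])
  also have "\<dots> \<le> suminf g"
    by (rule suminf_le[OF \<delta>_le sa \<open>summable g\<close>])
  also have "\<dots> = (C / D) * (\<Sum>n. (1 / D) ^ n)"
    unfolding g_def by (rule suminf_mult[OF summable_geometric[OF q]])
  also have "\<dots> = C / (D - 1)"
    using suminf_geometric[OF q] \<open>D \<ge> 2\<close> by (simp add: field_simps)
  also have "\<dots> \<le> C"
    using \<open>D \<ge> 2\<close> \<open>C \<ge> 0\<close> by (simp add: divide_le_eq mult_le_cancel_left1)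
  finally show ?thesis
    using \<open>lim b = b 0 + suminf \<delta>\<close> by (simp add: b_def[abs_def])
qed

text \<open>At an archimedean place each step of the orbit changes \<open>ln |z|\<close> by \<open>d ln |z|\<close> up to
  \<open>length \<beta> * ln 2\<close>, by the bounds on \<open>|f_t(z)|\<close>.\<close>

lemma green_archimedean_bound:
  fixes v :: "'k::field \<Rightarrow> real"
  assumes av: "abs_value v" and d: "e * length \<beta> \<ge> 2"
    and z: "v z > 2 ^ length \<beta>" "v z ^ e \<ge> 2 * sum_list (map v \<beta>) * max 1 (v t)"
  shows "\<bar>green (e * length \<beta>) (famf e \<beta> t) v z - ln (v z)\<bar> \<le> real (length \<beta>) * ln 2"
proof -
  define f where "f = famf e \<beta> t"
  define d where "d = e * length \<beta>"
  define M where "M = 2 * sum_list (map v \<beta>) * max 1 (v t)"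
  have region: "v ((f ^^ n) z) > 2 ^ length \<beta> \<and> v ((f ^^ n) z) ^ e \<ge> M" for n
  proof (induction n)
    case (Suc n)
    then show ?case
      using famf_archimedean_region_invariant[OF av d, of "(f ^^ n) z" t] by (simp add: f_def M_def)
  qed (use z in \<open>simp add: M_def\<close>)
  have pos: "v ((f ^^ n) z) > 1" for n
    using region[of n] one_le_power[of "2::real" "length \<beta>"] by linarith
  define a where "a n = ln (v ((f ^^ n) z))" for n
  have "\<bar>a (Suc n) - real d * a n\<bar> \<le> real (length \<beta>) * ln 2" for n
  proof -
    define w where "w = (f ^^ n) z"
    have "v w > 0" using pos[of n] by (simp add: w_def)
    have "v w ^ e \<ge> 2 * sum_list (map v \<beta>) * max 1 (v t)"
      using region[of n] by (simp add: w_def M_def)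
    from famf_abs_value_bounds[OF av this]
    have bounds: "v w ^ d / 2 ^ length \<beta> \<le> v (f w)" "v (f w) \<le> 2 ^ length \<beta> * v w ^ d"
      by (simp_all add: f_def d_def)
    then have "v (f w) > 0"
      using \<open>v w > 0\<close> by (smt (verit) divide_pos_pos zero_less_power)
    then have "real d * ln (v w) - real (length \<beta>) * ln 2 \<le> ln (v (f w))"
      "ln (v (f w)) \<le> real (length \<beta>) * ln 2 + real d * ln (v w)"
      using bounds \<open>v w > 0\<close> by (simp_all add: ln_div ln_mult ln_realpow flip: ln_le_cancel_iff)
    then show ?thesis
      by (simp add: a_def w_def abs_le_iff)
  qed
  moreover have "real d \<ge> 2"
    using d unfolding d_def by (metis of_nat_le_iff of_nat_numeral)
  ultimately have "\<bar>lim (\<lambda>n. a n / real d ^ n) - a 0\<bar> \<le> real (length \<beta>) * ln 2"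
    by (intro lim_divide_power_near_initial) simp_all
  moreover have "green d f v z = lim (\<lambda>n. a n / real d ^ n)"
    using pos by (simp add: green_def a_def logp_eq_ln less_imp_le)
  ultimately show ?thesis
    by (simp add: a_def f_def d_def)
qed

context
  fixes v :: "'k::field \<Rightarrow> real" and e :: nat and \<beta> :: "'k list" and t :: 'k
  assumes av: "abs_value v" and um: "ultrametric v" and units: "\<forall>b\<in>set \<beta>. v b = 1"
    and deg: "e * length \<beta> \<ge> 2"
begin

lemma good_degree_pos: "e > 0" "\<beta> \<noteq> []"
  using deg by (auto intro: Nat.gr0I)

lemma good_orbit_escaping:
  assumes "v z ^ e > max 1 (v t)"
  shows "v ((famf e \<beta> t ^^ n) z) = v z ^ ((e * length \<beta>) ^ n)"
proof (rule ultrametric_orbit_abs_value[OF av um])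
  show "v z > 1"
    using assms abs_value_nonneg[OF av, of z] by (metis max.strict_boundedE not_less power_le_one)
  show "\<forall>b\<in>set \<beta>. v (b * t) < v z ^ e"
    using assms units by (simp add: abs_value_mult[OF av])
qed (use good_degree_pos in simp)

lemma good_green_escaping:
  assumes "v z ^ e > max 1 (v t)"
  shows "green (e * length \<beta>) (famf e \<beta> t) v z = ln (v z)"
proof (rule green_eq_ln_if_orbit_power)
  show "v z > 1"
    using assms abs_value_nonneg[OF av, of z] by (metis max.strict_boundedE not_less power_le_one)
qed (use good_degree_pos good_orbit_escaping[OF assms] in auto)

lemma good_famf_below_threshold:
  assumes "v t > 1" "v z ^ e < v t"
  shows "v (famf e \<beta> t z) = v t ^ length \<beta>" "v (famf e \<beta> t z) ^ e > max 1 (v t)"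
proof -
  have "\<forall>b\<in>set \<beta>. v (z ^ e - b * t) = v t"
    using assms(2) units ultrametric_diff_eq_right[OF av um]
    by (simp add: abs_value_power[OF av] abs_value_mult[OF av])
  then have "(\<Prod>b\<leftarrow>\<beta>. v (z ^ e - b * t)) = v t ^ length \<beta>"
    by (induction \<beta>) auto
  then show fz: "v (famf e \<beta> t z) = v t ^ length \<beta>"
    by (simp add: abs_value_famf[OF av])
  have "v t ^ 1 < v t ^ (e * length \<beta>)"
    using assms(1) deg by (intro power_strict_increasing) auto
  then show "v (famf e \<beta> t z) ^ e > max 1 (v t)"
    using fz assms(1) by (simp add: power_mult[symmetric] mult.commute)
qed

lemma good_green_below_threshold:
  assumes "v t > 1" "v z ^ e < v t"
  shows "green (e * length \<beta>) (famf e \<beta> t) v z = ln (v t) / real e"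
proof -
  define w where "w = famf e \<beta> t z"
  have "v w > 1"
    using good_famf_below_threshold[OF assms] abs_value_nonneg[OF av, of w]
    by (metis max.strict_boundedE not_less power_le_one w_def)
  have "green (e * length \<beta>) (famf e \<beta> t) v z = ln (v w) / real (e * length \<beta>)"
    using \<open>v w > 1\<close> good_degree_pos good_orbit_escaping[of w] good_famf_below_threshold(2)[OF assms]
    by (intro green_eq_ln_div_if_shifted_orbit_power) (auto simp: w_def)
  also have "\<dots> = ln (v t) / real e"
    using good_famf_below_threshold(1)[OF assms] assms(1) good_degree_pos by (simp add: w_def ln_realpow)
  finally show ?thesis .
qed

lemma good_green_bounded:
  assumes "v t \<le> 1" "v z \<le> 1"
  shows "green (e * length \<beta>) (famf e \<beta> t) v z = 0"
  using ultrametric_orbit_le_1[OF av um _ assms] units by (intro green_eq_0_if_orbit_bounded) simp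

end

lemma green_lower_bound_good_place:
  fixes v :: "'k::field \<Rightarrow> real"
  assumes av: "abs_value v" and um: "ultrametric v" and units: "\<forall>b\<in>set \<beta>. v b = 1"
    and deg: "e * length \<beta> \<ge> 2" and "\<exists>\<pi>. uniformizer v \<pi>" and "\<not> int e dvd nval v t"
  shows "green (e * length \<beta>) (famf e \<beta> t) v z \<ge> logp (v t) / real (e * length \<beta>)"
proof (cases "v t \<le> 1")
  case True
  then have "logp (v t) = 0"
    by (simp add: logp_def)
  moreover have "green (e * length \<beta>) (famf e \<beta> t) v z \<ge> 0"
  proof (cases "v z \<le> 1")
    case False
    then have "v z ^ e > max 1 (v t)"
      using True good_degree_pos[OF av um units deg] by (simp add: one_less_power)
    then show ?thesis
      using False good_green_escaping[OF av um units deg] by simp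
  qed (simp add: good_green_bounded[OF av um units deg True])
  ultimately show ?thesis by simp
next
  case False
  then have "v t > 1" "logp (v t) = ln (v t)"
    by (simp_all add: logp_eq_ln)
  have "e > 0" "e \<le> e * length \<beta>"
    using good_degree_pos[OF av um units deg] by (simp_all add: Suc_le_eq)
  moreover have "e * length \<beta> > 0"
    using deg by linarith
  ultimately have "ln (v t) / real (e * length \<beta>) \<le> ln (v t) / real e"
    using \<open>v t > 1\<close> by (intro divide_left_mono) (simp_all only: of_nat_le_iff, simp_all)
  moreover have "ln (v t) / real e \<le> green (e * length \<beta>) (famf e \<beta> t) v z"
  proof (cases "v z ^ e" "v t" rule: linorder_cases)
    case less
    then show ?thesis
      using good_green_below_threshold[OF av um units deg \<open>v t > 1\<close>] by simp
  next
    case equal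
    have "z \<noteq> 0"
    proof
      assume "z = 0"
      then show False
        using equal \<open>v t > 1\<close> \<open>e > 0\<close> abs_value_0[OF av] by (simp add: zero_power)
    qed
    then have "int e dvd nval v t"
      using nval_power[OF av assms(5) _ equal[symmetric]] by simp
    then show ?thesis
      using assms(6) by simp
  next
    case greater
    then have "v z ^ e > max 1 (v t)"
      using \<open>v t > 1\<close> by simp
    then have "v z > 1"
      using abs_value_nonneg[OF av, of z] by (metis max.strict_boundedE not_less power_le_one)
    have "ln (v t) < ln (v z ^ e)"
      using greater \<open>v t > 1\<close> by simp
    then have "ln (v t) / real e < ln (v z)"
      using \<open>v z > 1\<close> \<open>e > 0\<close> by (simp add: ln_realpow divide_less_eq mult.commute)
    then show ?thesis
      using good_green_escaping[OF av um units deg \<open>v z ^ e > max 1 (v t)\<close>] by simp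
  qed
  ultimately show ?thesis
    using \<open>logp (v t) = ln (v t)\<close> by simp
qed

lemma preperiodic_good_place:
  fixes v :: "'k::field \<Rightarrow> real"
  assumes av: "abs_value v" and um: "ultrametric v" and units: "\<forall>b\<in>set \<beta>. v b = 1"
    and deg: "e * length \<beta> \<ge> 2" and "v t > 1" and pre: "preperiodic (famf e \<beta> t) z"
  shows "v z ^ e = v t"
proof (rule ccontr)
  define f where "f = famf e \<beta> t"
  have fin: "finite {(f ^^ n) z | n. True}"
    using pre by (simp add: preperiodic_def f_def)
  have escaping: "infinite {(f ^^ n) w | n. True}" if "v w ^ e > max 1 (v t)" for w
  proof -
    have "v w > 1"
      using that abs_value_nonneg[OF av, of w] by (metis max.strict_boundedE not_less power_le_one)
    moreover have "\<forall>n. v ((f ^^ n) w) = v w ^ ((e * length \<beta>) ^ n)"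
      using good_orbit_escaping[OF av um units deg that] by (simp add: f_def)
    ultimately show ?thesis
      by (rule infinite_orbit_if_orbit_power[OF _ deg])
  qed
  assume "v z ^ e \<noteq> v t"
  then consider "v z ^ e > v t" | "v z ^ e < v t" by linarith
  then show False
  proof cases
    case 1
    then show False
      using escaping[of z] fin \<open>v t > 1\<close> by simp
  next
    case 2
    have "{(f ^^ n) (f z) | n. True} \<subseteq> {(f ^^ n) z | n. True}"
    proof
      fix x assume "x \<in> {(f ^^ n) (f z) | n. True}"
      then obtain n where "x = (f ^^ n) (f z)" by blast
      then have "x = (f ^^ Suc n) z"
        by (simp add: funpow_Suc_right del: funpow.simps)
      then show "x \<in> {(f ^^ n) z | n. True}" by blast
    qed
    then show False
      using escaping[of "f z"] good_famf_below_threshold(2)[OF av um units deg \<open>v t > 1\<close> 2] fin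
      by (auto simp: f_def dest: finite_subset)
  qed
qed

text \<open>The paper's \<open>M_K\<close>-constant \<open>a_v\<close> is \<open>ln (escape_radius \<beta> v)\<close>.\<close>

definition escape_radius :: "'k::field_char_0 list \<Rightarrow> ('k \<Rightarrow> real) \<Rightarrow> real" where
  "escape_radius \<beta> v = (if archimedean v then 2 ^ length \<beta> + 2 * sum_list (map v \<beta>) + 1
     else Max (insert 1 (v ` set \<beta>)))"

lemma escape_radius_ge_1:
  assumes "abs_value v"
  shows "escape_radius \<beta> v \<ge> 1"
proof -
  have "sum_list (map v \<beta>) \<ge> 0"
    using abs_value_nonneg[OF assms] by (intro sum_list_nonneg) auto
  then show ?thesis
    by (simp add: escape_radius_def)
qed

lemma escape_condition_unfold:
  fixes r s E :: real
  assumes "r > 0" "E \<ge> 1" "e > 0" and escape: "ln r > logp s / real e + ln E"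
  shows "r > E" "r ^ e > E ^ e * max 1 s"
proof -
  have "logp s \<ge> 0"
    by (simp add: logp_def)
  then show "r > E"
    using escape assms(1-3) by (smt (verit) divide_nonneg_pos ln_less_cancel_iff of_nat_0_less_iff)
  have "ln (E ^ e * max 1 s) = logp s + real e * ln E"
    using assms(2) by (simp add: ln_mult ln_realpow logp_def)
  also have "\<dots> < ln (r ^ e)"
    using escape assms(1,3) by (simp add: ln_realpow field_simps)
  finally show "r ^ e > E ^ e * max 1 s"
    using assms(1,2) by (simp add: ln_less_cancel_iff)
qed

lemma famf_escape_region:
  fixes v :: "'k::field_char_0 \<Rightarrow> real"
  assumes "v \<in> places" and deg: "e * length \<beta> \<ge> 2" and "z \<noteq> 0"
    and escape: "ln (v z) > logp (v t) / real e + ln (escape_radius \<beta> v)"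
  shows "v (famf e \<beta> t z) \<ge> v z \<and>
    \<bar>green (e * length \<beta>) (famf e \<beta> t) v z - ln (v z)\<bar> \<le> (if archimedean v then real (length \<beta>) * ln 2 else 0)"
proof -
  define E where "E = escape_radius \<beta> v"
  have av: "abs_value v"
    using abs_value_if_place[OF \<open>v \<in> places\<close>] .
  have "e > 0"
    using deg by (auto intro: Nat.gr0I)
  have "E \<ge> 1"
    using escape_radius_ge_1[OF av] by (simp add: E_def)
  then have "E \<le> E ^ e"
    using \<open>e > 0\<close> by (metis One_nat_def Suc_leI power_increasing power_one_right)
  have z: "v z > E" "v z ^ e > E ^ e * max 1 (v t)"
    using escape_condition_unfold[OF abs_value_pos[OF av \<open>z \<noteq> 0\<close>] \<open>E \<ge> 1\<close> \<open>e > 0\<close>] escape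
    by (simp_all add: E_def)
  show ?thesis
  proof (cases "archimedean v")
    case True
    then have E: "E = 2 ^ length \<beta> + 2 * sum_list (map v \<beta>) + 1"
      by (simp add: E_def escape_radius_def)
    have "sum_list (map v \<beta>) \<ge> 0"
      using abs_value_nonneg[OF av] by (intro sum_list_nonneg) auto
    moreover have "(2::real) ^ length \<beta> \<ge> 0"
      by simp
    ultimately have "v z > 2 ^ length \<beta>" "2 * sum_list (map v \<beta>) \<le> E ^ e"
      using z(1) E \<open>E \<le> E ^ e\<close> by linarith+
    moreover have "2 * sum_list (map v \<beta>) * max 1 (v t) \<le> E ^ e * max 1 (v t)"
      using calculation(2) by (intro mult_right_mono) auto
    ultimately show ?thesis
      using z(2) True famf_archimedean_region_invariant(1)[OF av deg]
        green_archimedean_bound[OF av deg] by simp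
  next
    case False
    have "v (b * t) < v z ^ e" if "b \<in> set \<beta>" for b
    proof -
      have "v b \<le> E"
        using False that by (simp add: E_def escape_radius_def)
      then have "v b * v t \<le> E ^ e * max 1 (v t)"
        using \<open>E \<le> E ^ e\<close> \<open>E \<ge> 1\<close> abs_value_nonneg[OF av] by (intro mult_mono) auto
      then show ?thesis
        using z(2) by (simp add: abs_value_mult[OF av])
    qed
    moreover have "v z > 1"
      using z(1) \<open>E \<ge> 1\<close> by simp
    moreover have "e * length \<beta> > 0"
      using deg by linarith
    ultimately have orbit: "\<forall>n. v ((famf e \<beta> t ^^ n) z) = v z ^ ((e * length \<beta>) ^ n)"
      using ultrametric_orbit_abs_value[OF av ultrametric_if_nonarchimedean_place[OF \<open>v \<in> places\<close> False]]
      by blast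
    have "v z ^ 1 \<le> v z ^ (e * length \<beta>)"
      using \<open>v z > 1\<close> deg by (intro power_increasing) linarith+
    then have "v (famf e \<beta> t z) \<ge> v z"
      using orbit[rule_format, of 1] by simp
    moreover have "green (e * length \<beta>) (famf e \<beta> t) v z = ln (v z)"
      using \<open>v z > 1\<close> \<open>e * length \<beta> > 0\<close> orbit by (intro green_eq_ln_if_orbit_power) auto
    ultimately show ?thesis
      using False by simp
  qed
qed

section \<open>Places of bad reduction\<close>

definition bad_reduction_places :: "'k::field_char_0 list \<Rightarrow> ('k \<Rightarrow> real) set" where
  "bad_reduction_places \<beta> = {v \<in> places. archimedean v \<or> (\<exists>b\<in>set \<beta>. v b \<noteq> 1)}"

lemma finite_bad_reduction_places:
  assumes nf: "number_field TYPE('k::field_char_0)" and "\<forall>b\<in>set \<beta>. b \<noteq> 0"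
  shows "finite (bad_reduction_places (\<beta> :: 'k list))"
proof -
  have "bad_reduction_places \<beta> \<subseteq> {v. v \<in> places \<and> archimedean v}
      \<union> (\<Union>b\<in>set \<beta>. {v. v \<in> places \<and> \<not> archimedean v \<and> v b \<noteq> 1})"
    by (auto simp: bad_reduction_places_def)
  moreover have "finite (\<Union>b\<in>set \<beta>. {v::'k \<Rightarrow> real. v \<in> places \<and> \<not> archimedean v \<and> v b \<noteq> 1})"
    using finite_nonunit_places[OF nf] assms(2) by simp
  ultimately show ?thesis
    using finite_archimedean_places[OF nf] by (simp add: finite_subset)
qed

lemma good_reduction_place:
  assumes "v \<in> places - bad_reduction_places \<beta>"
  shows "abs_value v" "ultrametric v" "\<forall>b\<in>set \<beta>. v b = 1" "\<not> archimedean v"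
  using assms abs_value_if_place ultrametric_if_nonarchimedean_place
  by (auto simp: bad_reduction_places_def)

lemma escape_radius_good_place:
  assumes "v \<in> places - bad_reduction_places \<beta>" "\<beta> \<noteq> []"
  shows "escape_radius \<beta> v = 1"
proof -
  have "v ` set \<beta> = (\<lambda>_. 1) ` set \<beta>"
    using good_reduction_place(3)[OF assms(1)] by (intro image_cong) auto
  then have "v ` set \<beta> = {1}"
    using assms(2) by (simp add: image_constant_conv)
  then show ?thesis
    using good_reduction_place(4)[OF assms(1)] by (simp add: escape_radius_def)
qed

lemma green_lower_bound_outside_bad_places:
  assumes "number_field TYPE('k::field_char_0)" and "v \<in> places - bad_reduction_places (\<beta> :: 'k list)"
    and "e * length \<beta> \<ge> 2" and "\<not> int e dvd nval v t"
  shows "green (e * length \<beta>) (famf e \<beta> t) v z \<ge> logp (v t) / real (e * length \<beta>)"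
proof -
  note good = good_reduction_place[OF assms(2)]
  obtain p where "prime p" "extends_padic p v"
    using padic_if_nonarchimedean_place good(4) assms(2) by blast
  then have "\<exists>\<pi>. uniformizer v \<pi>"
    by (rule uniformizer_exists_if_padic[OF assms(1) good(1)])
  then show ?thesis
    by (rule green_lower_bound_good_place[OF good(1-3) assms(3) _ assms(4)])
qed

lemma preperiodic_outside_bad_places:
  assumes "v \<in> places - bad_reduction_places \<beta>" and "e * length \<beta> \<ge> 2"
    and "v t > 1" "preperiodic (famf e \<beta> t) z"
  shows "v z ^ e = v t"
  by (rule preperiodic_good_place[OF good_reduction_place(1-3)[OF assms(1)] assms(2-4)])

lemma MK_constant_vanishing_outside:
  assumes "finite S" "\<And>v. v \<in> places - S \<Longrightarrow> c v = 0"
  shows "MK_constant c"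
proof -
  have "{v \<in> places. c v \<noteq> 0} \<subseteq> S"
    using assms(2) by blast
  then show ?thesis
    unfolding MK_constant_def using assms(1) by (rule finite_subset)
qed

theorem lemma2p1:
  fixes e :: nat and \<beta> :: "'k::field_char_0 list"
  assumes "number_field TYPE('k)"
    and "e \<ge> 2" and "\<beta> \<noteq> []" and "\<forall>b\<in>set \<beta>. b \<noteq> 0"
  defines "d \<equiv> e * length \<beta>"
  shows
   "(\<exists>A B. MK_constant A \<and> MK_constant B \<and>
       (\<forall>v\<in>places. \<forall>t z::'k. z \<noteq> 0 \<longrightarrow>
          ln (v z) > logp (v t) / real e + A v \<longrightarrow>
          v (famf e \<beta> t z) \<ge> v z \<and>
          \<bar>green d (famf e \<beta> t) v z - ln (v z)\<bar> \<le> B v) \<and>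
       (\<forall>v\<in>places. \<not> archimedean v \<longrightarrow> B v = 0))
    \<and> (\<exists>S. finite S \<and> S \<subseteq> places \<and>
       (\<forall>v\<in>places - S. \<not> archimedean v \<longrightarrow>
          (\<forall>t::'k. t \<noteq> 0 \<longrightarrow> \<not> (int e dvd nval v t) \<longrightarrow>
             (\<forall>z::'k. green d (famf e \<beta> t) v z \<ge> logp (v t) / real d))))
    \<and> (\<exists>S. finite S \<and> S \<subseteq> places \<and>
       (\<forall>t::'k. \<forall>v\<in>places - S. v t > 1 \<longrightarrow>
          (\<forall>z::'k. preperiodic (famf e \<beta> t) z \<longrightarrow> v z ^ e = v t)))"
proof -
  define S where "S = bad_reduction_places \<beta>"
  define A where "A v = ln (escape_radius \<beta> v)" for v :: "'k \<Rightarrow> real"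
  define B where "B v = (if archimedean v then real (length \<beta>) * ln 2 else 0)" for v :: "'k \<Rightarrow> real"
  have "e * 1 \<le> e * length \<beta>"
    using assms(3) by (intro mult_le_mono2) (simp add: Suc_le_eq)
  then have deg: "e * length \<beta> \<ge> 2"
    using assms(2) by linarith
  have S: "finite S" "S \<subseteq> places"
    using finite_bad_reduction_places[OF assms(1,4)] by (auto simp: S_def bad_reduction_places_def)
  have "MK_constant A" "MK_constant B"
    using S(1) escape_radius_good_place[OF _ assms(3)] good_reduction_place(4)[of _ \<beta>]
    by (auto simp: A_def B_def S_def intro!: MK_constant_vanishing_outside)
  moreover have "\<forall>v\<in>places. \<forall>t z::'k. z \<noteq> 0 \<longrightarrow> ln (v z) > logp (v t) / real e + A v \<longrightarrow>
      v (famf e \<beta> t z) \<ge> v z \<and> \<bar>green d (famf e \<beta> t) v z - ln (v z)\<bar> \<le> B v"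
    using famf_escape_region[OF _ deg] by (simp add: A_def B_def d_def)
  moreover have "\<forall>v\<in>places - S. \<not> archimedean v \<longrightarrow> (\<forall>t::'k. t \<noteq> 0 \<longrightarrow> \<not> int e dvd nval v t \<longrightarrow>
      (\<forall>z::'k. green d (famf e \<beta> t) v z \<ge> logp (v t) / real d))"
    using green_lower_bound_outside_bad_places[OF assms(1) _ deg] by (simp add: S_def d_def)
  moreover have "\<forall>t::'k. \<forall>v\<in>places - S. v t > 1 \<longrightarrow>
      (\<forall>z::'k. preperiodic (famf e \<beta> t) z \<longrightarrow> v z ^ e = v t)"
    using preperiodic_outside_bad_places[OF _ deg] by (simp add: S_def)
  moreover have "\<forall>v\<in>places. \<not> archimedean v \<longrightarrow> B v = 0"
    by (simp add: B_def)
  ultimately show ?thesis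
    using S by blast
qed

end
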